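(* Let $(X,\mathcal{A},p)$ be a standard Borel probability space. The assignments $e\mapsto\mathcal{I}_e$ and $\mathcal{B}\mapsto e_\mathcal{B}$ are mutually inverse order-preserving bijections between the partially ordered set of ($p$-a.s. classes of) measure-preserving $p$-a.s. idempotent Markov kernels on $(X,\mathcal{A},p)$ and the set of $p$-complete sub-$\sigma$-algebras of $\mathcal{A}$ ordered by inclusion.
   Context: Kernels are identified up to $p$-a.s. equality, with composition $(\ell\circ k)(C\mid x)=\int\ell(C\mid y)k(dy\mid x)$; $e$ is $p$-a.s. idempotent if $e\circ e=e$ a.s.; idempotents are ordered by $e_1\le e_2$ iff $e_1\circ e_2=e_2\circ e_1=e_1$ a.s. $\mathcal{I}_e=\{B\in\mathcal{A}: e(B\mid x)=1_B(x)$ for $p$-a.a. $x\}$. $e_\mathcal{B}(A\mid x)=\mathbb{P}[A\mid\mathcal{B}](x)$ (regular conditional probability). A sub-$\sigma$-algebra $\mathcal{B}\subseteq\mathcal{A}$ is $p$-complete if it contains every $A\in\mathcal{A}$ with $p(A)=0$. *)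

theory Defs
  imports "HOL-Probability.Probability"
begin

definition standard_borel :: "'a measure \<Rightarrow> bool" where
  "standard_borel M \<longleftrightarrow>
     (\<exists>T. topspace T = space M \<and> completely_metrizable_space T \<and> separable_space T \<and>
          sets M = sigma_sets (space M) {U. openin T U})"

definition markov_kernel :: "'a measure \<Rightarrow> ('a \<Rightarrow> 'a measure) \<Rightarrow> bool" where
  "markov_kernel M k \<longleftrightarrow> k \<in> M \<rightarrow>\<^sub>M prob_algebra M"

definition kcomp :: "('a \<Rightarrow> 'a measure) \<Rightarrow> ('a \<Rightarrow> 'a measure) \<Rightarrow> ('a \<Rightarrow> 'a measure)" where
  "kcomp l k = (\<lambda>x. bind (k x) l)"

definition kernel_ae_eq :: "'a measure \<Rightarrow> ('a \<Rightarrow> 'a measure) \<Rightarrow> ('a \<Rightarrow> 'a measure) \<Rightarrow> bool" where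
  "kernel_ae_eq M k l \<longleftrightarrow> (AE x in M. k x = l x)"

definition measure_preserving_kernel :: "'a measure \<Rightarrow> ('a \<Rightarrow> 'a measure) \<Rightarrow> bool" where
  "measure_preserving_kernel M k \<longleftrightarrow> bind M k = M"

definition ae_idempotent :: "'a measure \<Rightarrow> ('a \<Rightarrow> 'a measure) \<Rightarrow> bool" where
  "ae_idempotent M e \<longleftrightarrow> kernel_ae_eq M (kcomp e e) e"

definition mp_idempotent :: "'a measure \<Rightarrow> ('a \<Rightarrow> 'a measure) \<Rightarrow> bool" where
  "mp_idempotent M e \<longleftrightarrow> markov_kernel M e \<and> measure_preserving_kernel M e \<and> ae_idempotent M e"

definition idem_le :: "'a measure \<Rightarrow> ('a \<Rightarrow> 'a measure) \<Rightarrow> ('a \<Rightarrow> 'a measure) \<Rightarrow> bool" where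
  "idem_le M e1 e2 \<longleftrightarrow> kernel_ae_eq M (kcomp e1 e2) e1 \<and> kernel_ae_eq M (kcomp e2 e1) e1"

definition inv_sets :: "'a measure \<Rightarrow> ('a \<Rightarrow> 'a measure) \<Rightarrow> 'a set set" where
  "inv_sets M e = {B \<in> sets M. AE x in M. measure (e x) B = indicator B x}"

definition p_complete_subalgebra :: "'a measure \<Rightarrow> 'a set set \<Rightarrow> bool" where
  "p_complete_subalgebra M B \<longleftrightarrow>
     sigma_algebra (space M) B \<and> B \<subseteq> sets M \<and> (\<forall>A \<in> sets M. measure M A = 0 \<longrightarrow> A \<in> B)"

definition is_rcp :: "'a measure \<Rightarrow> 'a set set \<Rightarrow> ('a \<Rightarrow> 'a measure) \<Rightarrow> bool" where
  "is_rcp M B e \<longleftrightarrow> markov_kernel M e \<and>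
     (\<forall>A \<in> sets M. AE x in M. measure (e x) A = real_cond_exp M (sigma (space M) B) (indicator A) x)"

end

(*
  For a measure-preserving a.s. idempotent kernel e and a set A, the function g = e(A|.) is
  harmonic (its e(.|x)-mean is g(x)), and invariance of p makes the conditional variances of g
  under the measures e(.|x) integrate to zero. So g is a.s. constant on the fibres e(.|x), its
  level sets are e-invariant, and e is I_e-measurable; as it also preserves p restricted to every
  invariant set, e is a regular conditional probability given I_e.  Conversely, a regular
  conditional probability given a p-complete B recovers B as its invariant sets and is idempotent
  since e_B(A|.) is B-measurable; it is a.s. unique because the sigma-algebra is countably
  generated, and the order correspondence is the tower property of conditional expectation.
  Existence on a standard Borel space is the compact-class argument: the conditional
  probabilities of a countable algebra that is inner regular with respect to compact sets are
  a.s. sigma-additive, hence extend by Caratheodory to a measurable kernel.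
*)
theory Submission
  imports Defs
begin

section \<open>Markov kernels\<close>

lemma markov_kernelD:
  assumes "markov_kernel M e" "x \<in> space M"
  shows "prob_space (e x)" "sets (e x) = sets M" "space (e x) = space M"
  using measurable_space[OF assms(1)[unfolded markov_kernel_def] assms(2)]
  by (auto simp: space_prob_algebra dest: sets_eq_imp_space_eq)

lemma markov_kernel_emeasure_eq_measure:
  "markov_kernel M e \<Longrightarrow> x \<in> space M \<Longrightarrow> emeasure (e x) A = ennreal (measure (e x) A)"
  by (metis markov_kernelD(1) prob_space.finite_measure finite_measure.emeasure_eq_measure)

lemma markov_kernel_measure_le_1:
  "markov_kernel M e \<Longrightarrow> x \<in> space M \<Longrightarrow> measure (e x) A \<le> 1"
  by (simp add: markov_kernelD(1) prob_space.prob_le_1)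

lemma markov_kernel_subprob_algebra: "markov_kernel M e \<Longrightarrow> e \<in> M \<rightarrow>\<^sub>M subprob_algebra M"
  unfolding markov_kernel_def by (rule measurable_prob_algebraD)

lemma measurable_markov_kernel_measure:
  "markov_kernel M e \<Longrightarrow> A \<in> sets M \<Longrightarrow> (\<lambda>x. measure (e x) A) \<in> borel_measurable M"
  unfolding markov_kernel_def by (rule measurable_compose[OF _ measurable_measure_prob_algebra])

lemma measurable_markov_kernel_emeasure:
  "markov_kernel M e \<Longrightarrow> A \<in> sets M \<Longrightarrow> (\<lambda>x. emeasure (e x) A) \<in> borel_measurable M"
  by (rule measurable_compose[OF markov_kernel_subprob_algebra measurable_emeasure_subprob_algebra])

lemma markov_kernel_kcomp:
  "markov_kernel M e1 \<Longrightarrow> markov_kernel M e2 \<Longrightarrow> markov_kernel M (kcomp e1 e2)"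
  unfolding markov_kernel_def kcomp_def by (rule measurable_bind_prob_space)

lemma emeasure_kcomp:
  assumes "markov_kernel M e1" "markov_kernel M e2" "x \<in> space M" "A \<in> sets M"
  shows "emeasure (kcomp e1 e2 x) A = (\<integral>\<^sup>+y. emeasure (e1 y) A \<partial>e2 x)"
  using assms unfolding kcomp_def markov_kernel_def
  by (intro emeasure_bind_prob_algebra measurable_space[of e2 M])

lemma (in prob_space) integrable_unit_valued:
  fixes f :: "'a \<Rightarrow> real"
  assumes "f \<in> borel_measurable M" "\<And>x. x \<in> space M \<Longrightarrow> 0 \<le> f x \<and> f x \<le> 1"
  shows "integrable M f"
  by (intro integrable_const_bound[where B=1] AE_I2) (use assms in auto)

lemma (in prob_space) nn_integral_unit_valued:
  fixes f :: "'a \<Rightarrow> real"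
  shows "f \<in> borel_measurable M \<Longrightarrow> (\<And>x. x \<in> space M \<Longrightarrow> 0 \<le> f x \<and> f x \<le> 1) \<Longrightarrow>
    (\<integral>\<^sup>+x. ennreal (f x) \<partial>M) = ennreal (\<integral>x. f x \<partial>M)"
  by (intro nn_integral_eq_integral AE_I2 integrable_unit_valued) auto

lemma (in prob_space) integral_unit_valued_bounds:
  fixes f :: "'a \<Rightarrow> real"
  assumes "f \<in> borel_measurable M" "\<And>x. x \<in> space M \<Longrightarrow> 0 \<le> f x \<and> f x \<le> 1"
  shows "0 \<le> (\<integral>x. f x \<partial>M)" "(\<integral>x. f x \<partial>M) \<le> 1"
proof -
  show "0 \<le> (\<integral>x. f x \<partial>M)" by (intro Bochner_Integration.integral_nonneg) (use assms in auto)
  have "(\<integral>x. f x \<partial>M) \<le> (\<integral>x. 1 \<partial>M)"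
    using assms by (intro integral_mono integrable_unit_valued) auto
  then show "(\<integral>x. f x \<partial>M) \<le> 1" by (simp add: prob_space)
qed

lemma (in finite_measure) integrable_real_indicator_finite [simp]:
  "A \<in> sets M \<Longrightarrow> integrable M (indicator A :: 'a \<Rightarrow> real)"
  by (simp add: less_top[symmetric])

lemma integrable_markov_kernel_measure:
  assumes "prob_space M" "markov_kernel M e" "A \<in> sets M"
  shows "integrable M (\<lambda>x. measure (e x) A)"
  using assms markov_kernel_measure_le_1
  by (intro prob_space.integrable_unit_valued measurable_markov_kernel_measure) auto

lemma nn_integral_markov_kernel_emeasure:
  assumes e1: "markov_kernel M e1" and e2: "markov_kernel M e2" and x: "x \<in> space M"
    and A: "A \<in> sets M"
  shows "(\<integral>\<^sup>+y. emeasure (e1 y) A \<partial>e2 x) = ennreal (\<integral>y. measure (e1 y) A \<partial>e2 x)"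
proof -
  have "(\<integral>\<^sup>+y. emeasure (e1 y) A \<partial>e2 x) = (\<integral>\<^sup>+y. ennreal (measure (e1 y) A) \<partial>e2 x)"
    using markov_kernelD[OF e2 x]
    by (intro nn_integral_cong) (simp add: markov_kernel_emeasure_eq_measure[OF e1])
  also have "\<dots> = ennreal (\<integral>y. measure (e1 y) A \<partial>e2 x)"
    using markov_kernelD[OF e2 x] measurable_markov_kernel_measure[OF e1 A]
      markov_kernel_measure_le_1[OF e1]
    by (intro prob_space.nn_integral_unit_valued) (auto cong: measurable_cong_sets)
  finally show ?thesis .
qed

lemma measure_kcomp:
  assumes e1: "markov_kernel M e1" and e2: "markov_kernel M e2" and x: "x \<in> space M"
    and A: "A \<in> sets M"
  shows "measure (kcomp e1 e2 x) A = (\<integral>y. measure (e1 y) A \<partial>e2 x)"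
proof -
  have "ennreal (measure (kcomp e1 e2 x) A) = ennreal (\<integral>y. measure (e1 y) A \<partial>e2 x)"
    using emeasure_kcomp[OF assms] nn_integral_markov_kernel_emeasure[OF assms]
      markov_kernel_emeasure_eq_measure[OF markov_kernel_kcomp[OF e1 e2] x] by simp
  moreover have "0 \<le> (\<integral>y. measure (e1 y) A \<partial>e2 x)" by (rule Bochner_Integration.integral_nonneg) simp
  ultimately show ?thesis by simp
qed

text \<open>The restriction of \<open>M\<close> to \<open>C\<close> is the density measure with density \<open>1\<^sub>C\<close>; a regular
  conditional probability given \<open>B\<close> is exactly a \<open>B\<close>-measurable kernel preserving all these
  restrictions for \<open>C \<in> B\<close>.\<close>

definition restriction_invariant :: "'a measure \<Rightarrow> ('a \<Rightarrow> 'a measure) \<Rightarrow> 'a set \<Rightarrow> bool" where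
  "restriction_invariant M e C \<longleftrightarrow> bind (density M (indicator C)) e = density M (indicator C)"

lemma emeasure_density_indicator:
  assumes "C \<in> sets M" "A \<in> sets M"
  shows "emeasure (density M (indicator C)) A = emeasure M (A \<inter> C)"
proof -
  have "emeasure (density M (indicator C)) A = (\<integral>\<^sup>+x. indicator C x * indicator A x \<partial>M)"
    using assms by (subst emeasure_density) (auto intro!: nn_integral_cong simp: mult.commute)
  also have "\<dots> = (\<integral>\<^sup>+x. indicator (A \<inter> C) x \<partial>M)"
    by (intro nn_integral_cong) (auto split: split_indicator)
  also have "\<dots> = emeasure M (A \<inter> C)" using assms by (intro nn_integral_indicator) blast
  finally show ?thesis .
qed

lemma restriction_invariant_space_iff: "restriction_invariant M e (space M) \<longleftrightarrow> bind M e = M"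
proof -
  have "density M (indicator (space M)) = M"
    by (subst density_cong[where f'="\<lambda>_. 1"]) (auto simp: density_1)
  then show ?thesis unfolding restriction_invariant_def by simp
qed

lemma
  assumes e: "markov_kernel M e" and C: "C \<in> sets M" and ne: "space M \<noteq> {}"
  shows sets_bind_density_indicator: "sets (bind (density M (indicator C)) e) = sets M"
    and emeasure_bind_density_indicator: "A \<in> sets M \<Longrightarrow>
      emeasure (bind (density M (indicator C)) e) A = (\<integral>\<^sup>+x. indicator C x * emeasure (e x) A \<partial>M)"
proof -
  show "sets (bind (density M (indicator C)) e) = sets M"
    using markov_kernelD[OF e] ne by (subst sets_bind[where N=M]) auto
  assume A: "A \<in> sets M"
  have e': "e \<in> density M (indicator C) \<rightarrow>\<^sub>M subprob_algebra M"
    using markov_kernel_subprob_algebra[OF e] by (simp cong: measurable_cong_sets)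
  have "emeasure (bind (density M (indicator C)) e) A = (\<integral>\<^sup>+x. emeasure (e x) A \<partial>density M (indicator C))"
    by (rule emeasure_bind) (use ne e' A in auto)
  also have "\<dots> = (\<integral>\<^sup>+x. indicator C x * emeasure (e x) A \<partial>M)"
    using C A markov_kernel_subprob_algebra[OF e] by (subst nn_integral_density) auto
  finally show "emeasure (bind (density M (indicator C)) e) A = (\<integral>\<^sup>+x. indicator C x * emeasure (e x) A \<partial>M)" .
qed

lemma restriction_invariant_iff_emeasure:
  assumes e: "markov_kernel M e" and C: "C \<in> sets M" and ne: "space M \<noteq> {}"
  shows "restriction_invariant M e C \<longleftrightarrow>
    (\<forall>A\<in>sets M. (\<integral>\<^sup>+x. indicator C x * emeasure (e x) A \<partial>M) = emeasure M (A \<inter> C))"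
  unfolding restriction_invariant_def
proof (intro iffI ballI)
  fix A assume "bind (density M (indicator C)) e = density M (indicator C)" "A \<in> sets M"
  then show "(\<integral>\<^sup>+x. indicator C x * emeasure (e x) A \<partial>M) = emeasure M (A \<inter> C)"
    by (metis emeasure_bind_density_indicator[OF e C ne] emeasure_density_indicator[OF C])
next
  assume "\<forall>A\<in>sets M. (\<integral>\<^sup>+x. indicator C x * emeasure (e x) A \<partial>M) = emeasure M (A \<inter> C)"
  then show "bind (density M (indicator C)) e = density M (indicator C)"
    by (intro measure_eqI)
       (simp_all add: sets_bind_density_indicator[OF e C ne] emeasure_bind_density_indicator[OF e C ne]
         emeasure_density_indicator[OF C])
qed

lemma restriction_invariantI_generator:
  assumes e: "markov_kernel M e" and C: "C \<in> sets M" and ne: "space M \<noteq> {}"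
    and G: "Int_stable G" "G \<subseteq> Pow (space M)" "sets M = sigma_sets (space M) G" "space M \<in> G"
    and fin: "emeasure M C \<noteq> \<infinity>"
    and eq: "\<And>A. A \<in> G \<Longrightarrow> (\<integral>\<^sup>+x. indicator C x * emeasure (e x) A \<partial>M) = emeasure M (A \<inter> C)"
  shows "restriction_invariant M e C"
  unfolding restriction_invariant_def
proof (rule measure_eqI_generator_eq[OF G(1,2), where A="\<lambda>_. space M"])
  fix A assume A: "A \<in> G"
  then have "A \<in> sets M" using G(3) by auto
  then show "emeasure (bind (density M (indicator C)) e) A = emeasure (density M (indicator C)) A"
    using emeasure_bind_density_indicator[OF e C ne] eq[OF A] emeasure_density_indicator[OF C] by simp
next
  show "sets (bind (density M (indicator C)) e) = sigma_sets (space M) G"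
    using sets_bind_density_indicator[OF e C ne] G(3) by simp
  show "emeasure (bind (density M (indicator C)) e) (space M) \<noteq> \<infinity>"
    using emeasure_bind_density_indicator[OF e C ne, of "space M"] eq[OF G(4)] fin
    by (simp add: Int_absorb1 sets.sets_into_space C)
qed (use G in auto)

lemma (in prob_space) restriction_invariant_iff_integral:
  assumes e: "markov_kernel M e" and C: "C \<in> sets M"
  shows "restriction_invariant M e C \<longleftrightarrow>
    (\<forall>A\<in>sets M. (\<integral>x. indicator C x * measure (e x) A \<partial>M) = measure M (A \<inter> C))"
proof -
  have "(\<integral>\<^sup>+x. indicator C x * emeasure (e x) A \<partial>M) = ennreal (\<integral>x. indicator C x * measure (e x) A \<partial>M)"
    if A: "A \<in> sets M" for A
  proof -
    have "(\<integral>\<^sup>+x. indicator C x * emeasure (e x) A \<partial>M) = (\<integral>\<^sup>+x. ennreal (indicator C x * measure (e x) A) \<partial>M)"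
      by (intro nn_integral_cong) (auto simp: markov_kernel_emeasure_eq_measure[OF e] split: split_indicator)
    also have "\<dots> = ennreal (\<integral>x. indicator C x * measure (e x) A \<partial>M)"
      using measurable_markov_kernel_measure[OF e A] C markov_kernel_measure_le_1[OF e]
      by (intro nn_integral_unit_valued) (auto split: split_indicator)
    finally show ?thesis .
  qed
  moreover have "0 \<le> (\<integral>x. indicator C x * measure (e x) A \<partial>M)" for A
    by (intro Bochner_Integration.integral_nonneg) simp
  ultimately show ?thesis
    using C by (simp add: restriction_invariant_iff_emeasure[OF e C not_empty] emeasure_eq_measure)
qed

lemma (in prob_space) integral_restriction_invariant:
  fixes h :: "'a \<Rightarrow> real"
  assumes e: "markov_kernel M e" and inv: "restriction_invariant M e C" and C: "C \<in> sets M"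
    and h: "h \<in> borel_measurable M" and h01: "\<And>x. x \<in> space M \<Longrightarrow> 0 \<le> h x \<and> h x \<le> 1"
  shows "(\<integral>x. indicator C x * (\<integral>y. h y \<partial>e x) \<partial>M) = (\<integral>x. indicator C x * h x \<partial>M)"
proof -
  have Ie: "0 \<le> (\<integral>y. h y \<partial>e x)" "(\<integral>y. h y \<partial>e x) \<le> 1"
    "(\<integral>\<^sup>+y. ennreal (h y) \<partial>e x) = ennreal (\<integral>y. h y \<partial>e x)" if x: "x \<in> space M" for x
    using prob_space.integral_unit_valued_bounds[OF markov_kernelD(1)[OF e x]]
      prob_space.nn_integral_unit_valued[OF markov_kernelD(1)[OF e x]]
      h h01 markov_kernelD(2,3)[OF e x] by (auto cong: measurable_cong_sets)
  have "(\<lambda>x. \<integral>y. h y \<partial>e x) \<in> borel_measurable M"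
    using measurable_compose[OF markov_kernel_subprob_algebra[OF e] integral_measurable_subprob_algebra[OF h]] .
  then have "ennreal (\<integral>x. indicator C x * (\<integral>y. h y \<partial>e x) \<partial>M)
      = (\<integral>\<^sup>+x. ennreal (indicator C x * (\<integral>y. h y \<partial>e x)) \<partial>M)"
    using Ie C by (intro nn_integral_unit_valued[symmetric]) (auto split: split_indicator)
  also have "\<dots> = (\<integral>\<^sup>+x. indicator C x * (\<integral>\<^sup>+y. ennreal (h y) \<partial>e x) \<partial>M)"
    using Ie by (intro nn_integral_cong) (auto split: split_indicator)
  also have "\<dots> = (\<integral>\<^sup>+x. (\<integral>\<^sup>+y. ennreal (h y) \<partial>e x) \<partial>density M (indicator C))"
    using C h markov_kernel_subprob_algebra[OF e] by (subst nn_integral_density) auto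
  also have "\<dots> = (\<integral>\<^sup>+y. ennreal (h y) \<partial>bind (density M (indicator C)) e)"
    using h markov_kernel_subprob_algebra[OF e]
    by (subst nn_integral_bind[where B=M]) (auto cong: measurable_cong_sets)
  also have "\<dots> = (\<integral>\<^sup>+y. indicator C y * ennreal (h y) \<partial>M)"
    using inv C h by (simp add: restriction_invariant_def nn_integral_density)
  also have "\<dots> = ennreal (\<integral>y. indicator C y * h y \<partial>M)"
    using C h h01 by (subst nn_integral_unit_valued[symmetric])
      (auto intro!: nn_integral_cong split: split_indicator)
  finally show ?thesis
    using Ie h01 by (subst (asm) ennreal_inj)
      (auto intro!: Bochner_Integration.integral_nonneg split: split_indicator)
qed

definition countable_generator :: "'a measure \<Rightarrow> 'a set set \<Rightarrow> bool" where
  "countable_generator M G \<longleftrightarrow> countable G \<and> Int_stable G \<and> G \<subseteq> Pow (space M) \<and>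
     sets M = sigma_sets (space M) G \<and> space M \<in> G"

lemma prob_space_eqI_generator:
  assumes G: "Int_stable G" "G \<subseteq> Pow \<Omega>" "\<Omega> \<in> G"
    and N1: "prob_space N1" "sets N1 = sigma_sets \<Omega> G"
    and N2: "prob_space N2" "sets N2 = sigma_sets \<Omega> G"
    and eq: "\<And>A. A \<in> G \<Longrightarrow> emeasure N1 A = emeasure N2 A"
  shows "N1 = N2"
proof (rule measure_eqI_generator_eq[OF G(1,2) _ N1(2) N2(2), where A="\<lambda>_. \<Omega>"])
  show "emeasure N1 \<Omega> \<noteq> \<infinity>"
    using prob_space.emeasure_le_1[OF N1(1), of \<Omega>] by (auto simp: top_unique)
qed (use G eq in auto)

lemma kernel_ae_eqI_countable_generator:
  assumes e1: "markov_kernel M e1" and e2: "markov_kernel M e2" and G: "countable_generator M G"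
    and eq: "\<And>A. A \<in> G \<Longrightarrow> AE x in M. measure (e1 x) A = measure (e2 x) A"
  shows "kernel_ae_eq M e1 e2"
  unfolding kernel_ae_eq_def
proof -
  have "AE x in M. \<forall>A\<in>G. measure (e1 x) A = measure (e2 x) A"
    using G eq unfolding countable_generator_def by (intro AE_ball_countable') auto
  then show "AE x in M. e1 x = e2 x"
  proof (rule AE_mp[OF _ AE_I2], intro impI)
    fix x assume x: "x \<in> space M" and h: "\<forall>A\<in>G. measure (e1 x) A = measure (e2 x) A"
    show "e1 x = e2 x"
      by (rule prob_space_eqI_generator[where G=G and \<Omega>="space M"])
         (use G h markov_kernelD[OF e1 x] markov_kernelD[OF e2 x] in
           \<open>auto simp: countable_generator_def markov_kernel_emeasure_eq_measure[OF e1 x]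
              markov_kernel_emeasure_eq_measure[OF e2 x]\<close>)
  qed
qed

lemma kcomp_ae_eqI_countable_generator:
  assumes e1: "markov_kernel M e1" and e2: "markov_kernel M e2" and e3: "markov_kernel M e3"
    and G: "countable_generator M G"
    and eq: "\<And>A. A \<in> G \<Longrightarrow> AE x in M. (\<integral>y. measure (e1 y) A \<partial>e2 x) = measure (e3 x) A"
  shows "kernel_ae_eq M (kcomp e1 e2) e3"
proof (rule kernel_ae_eqI_countable_generator[OF markov_kernel_kcomp[OF e1 e2] e3 G])
  fix A assume A: "A \<in> G"
  then have "A \<in> sets M" using G unfolding countable_generator_def by auto
  with eq[OF A] show "AE x in M. measure (kcomp e1 e2 x) A = measure (e3 x) A"
    by (auto simp: measure_kcomp[OF e1 e2] elim: AE_mp)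
qed

section \<open>Regular conditional probabilities\<close>

locale complete_subalgebra = prob_space M for M :: "'a measure" +
  fixes B :: "'a set set"
  assumes p_complete: "p_complete_subalgebra M B"
begin

abbreviation "MB \<equiv> sigma (space M) B"

lemma sigma_algebra_B: "sigma_algebra (space M) B"
  using p_complete unfolding p_complete_subalgebra_def by auto

lemma B_subset_sets: "B \<subseteq> sets M"
  using p_complete unfolding p_complete_subalgebra_def by auto

lemma sets_MB [simp]: "sets MB = B"
  using sigma_algebra.sets_measure_of_eq[OF sigma_algebra_B] by simp

lemma space_MB [simp]: "space MB = space M"
  by (simp add: space_measure_of_conv)

lemma subalgebra_MB: "subalgebra M MB"
  unfolding subalgebra_def using B_subset_sets by simp

sublocale sub: finite_measure_subalgebra M MB
  by unfold_locales (rule subalgebra_MB)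

lemma null_sets_subset_B: "null_sets M \<subseteq> B"
  using p_complete unfolding p_complete_subalgebra_def by (auto simp: null_sets_def measure_def)

lemma AE_eq_set_in_B:
  assumes A: "A \<in> sets M" and C: "C \<in> B" and ae: "AE x in M. x \<in> A \<longleftrightarrow> x \<in> C"
  shows "A \<in> B"
proof -
  interpret B: sigma_algebra "space M" B by (rule sigma_algebra_B)
  obtain N where N: "N \<in> null_sets M" "{x\<in>space M. \<not> (x \<in> A \<longleftrightarrow> x \<in> C)} \<subseteq> N"
    using ae by (auto elim!: AE_E)
  have "C \<subseteq> space M" "A \<subseteq> space M"
    using C A B.sets_into_space sets.sets_into_space by auto
  then have "A = (C - N) \<union> (A \<inter> N)" using N(2) by blast
  moreover have "C - N \<in> B"
    using C N(1) null_sets_subset_B by (intro B.Diff) auto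
  moreover have "A \<inter> N \<in> B"
    using N(1) A null_sets_subset_B by (metis Int_commute null_set_Int1 subsetD)
  ultimately show ?thesis by (metis B.Un)
qed

lemma measurable_MB_AE_cong:
  assumes f: "f \<in> M \<rightarrow>\<^sub>M N" and g: "g \<in> MB \<rightarrow>\<^sub>M N" and ae: "AE x in M. f x = g x"
  shows "f \<in> MB \<rightarrow>\<^sub>M N"
proof (rule measurableI)
  show "f x \<in> space N" if "x \<in> space MB" for x using f that by (auto dest: measurable_space)
next
  fix S assume S: "S \<in> sets N"
  have "AE x in M. x \<in> f -` S \<inter> space M \<longleftrightarrow> x \<in> g -` S \<inter> space M"
    using ae by eventually_elim auto
  from AE_eq_set_in_B[OF measurable_sets[OF f S] _ this] measurable_sets[OF g S]
  show "f -` S \<inter> space MB \<in> sets MB" by simp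
qed

lemma markov_kernel_measurable_MB:
  assumes e: "markov_kernel M e"
    and meas: "\<And>A. A \<in> sets M \<Longrightarrow> (\<lambda>x. measure (e x) A) \<in> borel_measurable MB"
  shows "e \<in> MB \<rightarrow>\<^sub>M prob_algebra M"
proof (rule measurable_prob_algebra_generated[where \<Omega>="space M" and G="sets M"])
  show "sets M = sigma_sets (space M) (sets M)" by (simp add: sets.sigma_sets_eq)
  show "Int_stable (sets M)" by (auto simp: Int_stable_def)
  show "sets M \<subseteq> Pow (space M)" using sets.space_closed by auto
  show "prob_space (e x)" "sets (e x) = sets M" if "x \<in> space MB" for x
    using markov_kernelD[OF e, of x] that by auto
  fix A assume "A \<in> sets M"
  then show "(\<lambda>x. emeasure (e x) A) \<in> borel_measurable MB"
    using meas by (subst measurable_cong[where g="\<lambda>x. ennreal (measure (e x) A)"])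
      (auto simp: markov_kernel_emeasure_eq_measure[OF e])
qed

lemma integral_indicator_cond_exp:
  assumes A: "A \<in> sets M" and C: "C \<in> B"
  shows "(\<integral>x. indicator C x * real_cond_exp M MB (indicator A) x \<partial>M) = measure M (A \<inter> C)"
proof -
  have "(\<integral>x. indicator C x * real_cond_exp M MB (indicator A) x \<partial>M)
      = (\<integral>x\<in>C. real_cond_exp M MB (indicator A) x \<partial>M)"
    by (simp add: set_lebesgue_integral_def)
  also have "\<dots> = (\<integral>x\<in>C. indicator A x \<partial>M)"
    using C A by (intro sub.real_cond_exp_intA[symmetric]) auto
  also have "\<dots> = measure M (A \<inter> C)"
    using A C B_subset_sets[THEN subsetD, OF C]
    by (simp add: set_lebesgue_integral_def indicator_inter_arith[symmetric] Int_commute)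
  finally show ?thesis .
qed

lemma measurable_MB_is_rcp:
  assumes R: "is_rcp M B e"
  shows "e \<in> MB \<rightarrow>\<^sub>M prob_algebra M"
proof -
  have e: "markov_kernel M e" using R unfolding is_rcp_def by auto
  show ?thesis
  proof (rule markov_kernel_measurable_MB[OF e])
    fix A assume A: "A \<in> sets M"
    show "(\<lambda>x. measure (e x) A) \<in> borel_measurable MB"
    proof (rule measurable_MB_AE_cong[OF measurable_markov_kernel_measure[OF e A]])
      show "real_cond_exp M MB (indicator A) \<in> borel_measurable MB"
        by (rule borel_measurable_cond_exp)
      show "AE x in M. measure (e x) A = real_cond_exp M MB (indicator A) x"
        using R A unfolding is_rcp_def by blast
    qed
  qed
qed

lemma restriction_invariant_is_rcp:
  assumes R: "is_rcp M B e" and C: "C \<in> B"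
  shows "restriction_invariant M e C"
proof -
  have e: "markov_kernel M e" using R unfolding is_rcp_def by auto
  have CM: "C \<in> sets M" using C B_subset_sets by auto
  have "(\<integral>x. indicator C x * measure (e x) A \<partial>M) = measure M (A \<inter> C)" if A: "A \<in> sets M" for A
  proof -
    have "AE x in M. measure (e x) A = real_cond_exp M MB (indicator A) x"
      using R A unfolding is_rcp_def by blast
    then have "AE x in M. indicator C x * measure (e x) A = indicator C x * real_cond_exp M MB (indicator A) x"
      by eventually_elim simp
    then have "(\<integral>x. indicator C x * measure (e x) A \<partial>M)
        = (\<integral>x. indicator C x * real_cond_exp M MB (indicator A) x \<partial>M)"
      using CM measurable_markov_kernel_measure[OF e A] borel_measurable_cond_exp2
      by (intro integral_cong_AE) auto
    then show ?thesis using integral_indicator_cond_exp[OF A C] by simp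
  qed
  then show ?thesis using restriction_invariant_iff_integral[OF e CM] by simp
qed

lemma is_rcpI:
  assumes eMB: "e \<in> MB \<rightarrow>\<^sub>M prob_algebra M"
    and inv: "\<And>C. C \<in> B \<Longrightarrow> restriction_invariant M e C"
  shows "is_rcp M B e"
proof -
  have e: "markov_kernel M e"
    unfolding markov_kernel_def using measurable_from_subalg[OF subalgebra_MB eMB] .
  have "AE x in M. measure (e x) A = real_cond_exp M MB (indicator A) x" if A: "A \<in> sets M" for A
  proof -
    have "AE x in M. real_cond_exp M MB (indicator A) x = measure (e x) A"
    proof (rule sub.real_cond_exp_charact)
      fix C assume "C \<in> sets MB"
      then have C: "C \<in> B" and CM: "C \<in> sets M" using B_subset_sets by auto
      have "(\<integral>x. indicator C x * measure (e x) A \<partial>M) = measure M (A \<inter> C)"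
        using inv[OF C] restriction_invariant_iff_integral[OF e CM] A by auto
      then show "(\<integral>x\<in>C. indicator A x \<partial>M) = (\<integral>x\<in>C. measure (e x) A \<partial>M)"
        using A CM by (simp add: set_lebesgue_integral_def indicator_inter_arith[symmetric] Int_commute)
    next
      show "(\<lambda>x. measure (e x) A) \<in> borel_measurable MB"
        using measurable_compose[OF eMB measurable_measure_prob_algebra[OF A]] .
    next
      show "integrable M (indicator A :: 'a \<Rightarrow> real)" using A by simp
      show "integrable M (\<lambda>x. measure (e x) A)"
        by (rule integrable_markov_kernel_measure[OF prob_space_axioms e A])
    qed
    then show ?thesis by (auto elim: AE_mp)
  qed
  with e show ?thesis unfolding is_rcp_def by auto
qed

lemma rcp_integral_eq_cond_exp:
  assumes R: "is_rcp M B e" and f: "f \<in> borel_measurable M"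
    and f01: "\<And>x. x \<in> space M \<Longrightarrow> 0 \<le> f x \<and> f x \<le> 1"
  shows "AE x in M. (\<integral>y. f y \<partial>e x) = real_cond_exp M MB f x"
proof -
  have e: "markov_kernel M e" using R unfolding is_rcp_def by auto
  have gMB: "(\<lambda>x. \<integral>y. f y \<partial>e x) \<in> borel_measurable MB"
    using measurable_compose[OF measurable_prob_algebraD[OF measurable_MB_is_rcp[OF R]]
      integral_measurable_subprob_algebra[OF f]] .
  have "AE x in M. real_cond_exp M MB f x = (\<integral>y. f y \<partial>e x)"
  proof (rule sub.real_cond_exp_charact)
    fix C assume "C \<in> sets MB"
    then have C: "C \<in> B" and CM: "C \<in> sets M" using B_subset_sets by auto
    show "(\<integral>x\<in>C. f x \<partial>M) = (\<integral>x\<in>C. (\<integral>y. f y \<partial>e x) \<partial>M)"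
      using integral_restriction_invariant[OF e restriction_invariant_is_rcp[OF R C] CM f f01]
      by (simp add: set_lebesgue_integral_def)
  next
    show "integrable M f" using f f01 by (rule integrable_unit_valued)
    have "0 \<le> (\<integral>y. f y \<partial>e x) \<and> (\<integral>y. f y \<partial>e x) \<le> 1" if x: "x \<in> space M" for x
      using prob_space.integral_unit_valued_bounds[OF markov_kernelD(1)[OF e x]]
        f f01 markov_kernelD(2,3)[OF e x] by (auto cong: measurable_cong_sets)
    then show "integrable M (\<lambda>x. \<integral>y. f y \<partial>e x)"
      using measurable_from_subalg[OF subalgebra_MB gMB] by (intro integrable_unit_valued) auto
  qed (rule gMB)
  then show ?thesis by (auto elim: AE_mp)
qed

lemma rcp_integral_measurable_MB:
  fixes f :: "'a \<Rightarrow> real"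
  assumes R: "is_rcp M B e" and f: "f \<in> borel_measurable MB"
    and f01: "\<And>x. x \<in> space M \<Longrightarrow> 0 \<le> f x \<and> f x \<le> 1"
  shows "AE x in M. (\<integral>y. f y \<partial>e x) = f x"
proof -
  have fM: "f \<in> borel_measurable M" using measurable_from_subalg[OF subalgebra_MB f] .
  have "AE x in M. real_cond_exp M MB f x = f x"
    using f fM f01 by (intro sub.real_cond_exp_F_meas integrable_unit_valued)
  moreover have "AE x in M. (\<integral>y. f y \<partial>e x) = real_cond_exp M MB f x"
    using rcp_integral_eq_cond_exp[OF R fM f01] .
  ultimately show ?thesis by eventually_elim simp
qed

lemma rcp_unique:
  assumes "is_rcp M B e" "is_rcp M B e'" "countable_generator M G"
  shows "kernel_ae_eq M e e'"
proof (rule kernel_ae_eqI_countable_generator[OF _ _ assms(3)])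
  show "markov_kernel M e" "markov_kernel M e'" using assms unfolding is_rcp_def by auto
  fix A assume "A \<in> G"
  then have "A \<in> sets M" using assms(3) unfolding countable_generator_def by auto
  then have "AE x in M. measure (e x) A = real_cond_exp M MB (indicator A) x"
       "AE x in M. measure (e' x) A = real_cond_exp M MB (indicator A) x"
    using assms(1,2) unfolding is_rcp_def by auto
  then show "AE x in M. measure (e x) A = measure (e' x) A" by eventually_elim simp
qed

lemma inv_sets_rcp:
  assumes R: "is_rcp M B e"
  shows "inv_sets M e = B"
proof
  show "B \<subseteq> inv_sets M e"
  proof
    fix C assume C: "C \<in> B"
    then have CM: "C \<in> sets M" using B_subset_sets by auto
    have "AE x in M. measure (e x) C = real_cond_exp M MB (indicator C) x"
      using R CM unfolding is_rcp_def by auto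
    moreover have "AE x in M. real_cond_exp M MB (indicator C) x = indicator C x"
      using C CM by (intro sub.real_cond_exp_F_meas borel_measurable_indicator) auto
    ultimately show "C \<in> inv_sets M e"
      using CM unfolding inv_sets_def by (auto elim: AE_mp)
  qed
  show "inv_sets M e \<subseteq> B"
  proof
    fix A assume "A \<in> inv_sets M e"
    then have A: "A \<in> sets M" and ae: "AE x in M. measure (e x) A = indicator A x"
      unfolding inv_sets_def by auto
    have "(\<lambda>x. measure (e x) A) \<in> borel_measurable MB"
      using measurable_compose[OF measurable_MB_is_rcp[OF R] measurable_measure_prob_algebra[OF A]] .
    then have S: "{x \<in> space M. 1/2 < measure (e x) A} \<in> B"
      unfolding borel_measurable_iff_greater by (metis sets_MB space_MB)
    show "A \<in> B"
      by (rule AE_eq_set_in_B[OF A S], rule AE_mp[OF ae AE_I2]) (auto split: split_indicator)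
  qed
qed

lemma rcp_measure_preserving: "is_rcp M B e \<Longrightarrow> bind M e = M"
  using restriction_invariant_is_rcp[of e "space M"] sets.top[of MB]
  by (simp add: restriction_invariant_space_iff)

lemma rcp_ae_idempotent:
  assumes R: "is_rcp M B e" and G: "countable_generator M G"
  shows "ae_idempotent M e"
  unfolding ae_idempotent_def
proof -
  have e: "markov_kernel M e" using R unfolding is_rcp_def by auto
  show "kernel_ae_eq M (kcomp e e) e"
  proof (rule kcomp_ae_eqI_countable_generator[OF e e e G])
    fix A assume "A \<in> G"
    then have A: "A \<in> sets M" using G unfolding countable_generator_def by auto
    show "AE x in M. (\<integral>y. measure (e y) A \<partial>e x) = measure (e x) A"
      using measurable_compose[OF measurable_MB_is_rcp[OF R] measurable_measure_prob_algebra[OF A]]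
        markov_kernel_measure_le_1[OF e]
      by (intro rcp_integral_measurable_MB[OF R]) auto
  qed
qed

lemma rcp_mp_idempotent:
  "is_rcp M B e \<Longrightarrow> countable_generator M G \<Longrightarrow> mp_idempotent M e"
  unfolding mp_idempotent_def measure_preserving_kernel_def
  using rcp_measure_preserving rcp_ae_idempotent by (auto simp: is_rcp_def)

end

lemma (in prob_space) complete_subalgebraI: "p_complete_subalgebra M B \<Longrightarrow> complete_subalgebra M B"
  by unfold_locales

section \<open>Measure-preserving idempotent kernels\<close>

lemma mp_idempotentD:
  assumes "mp_idempotent M e"
  shows "markov_kernel M e" "bind M e = M" "ae_idempotent M e"
  using assms unfolding mp_idempotent_def measure_preserving_kernel_def by auto

lemma prob_eq_if_AE_iff_const:
  assumes N: "prob_space N" and S: "S \<in> sets N" and ae: "AE y in N. y \<in> S \<longleftrightarrow> c"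
  shows "measure N S = (if c then 1 else 0)"
proof (cases c)
  case True
  then show ?thesis using ae prob_space.AE_in_set_eq_1[OF N S] by simp
next
  case False
  then have "AE y in N. y \<notin> S" using ae by simp
  then have "emeasure N S = 0"
    using AE_iff_measurable[OF S, of "\<lambda>y. y \<notin> S"] S sets.sets_into_space by auto
  then show ?thesis using False by (simp add: measure_def)
qed

lemma prob_UN_eq_indicator:
  fixes A :: "nat \<Rightarrow> 'a set"
  assumes N: "prob_space N" and A: "range A \<subseteq> sets N"
    and eq: "\<And>i. measure N (A i) = indicator (A i) x"
  shows "measure N (\<Union>i. A i) = indicator (\<Union>i. A i) x"
proof -
  interpret prob_space N by (rule N)
  show ?thesis
  proof (cases "\<exists>i. x \<in> A i")
    case True
    then obtain i where i: "x \<in> A i" by auto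
    have "(\<Union>i. A i) \<in> sets N" by (rule sets.countable_UN[OF A])
    then have "measure N (A i) \<le> measure N (\<Union>i. A i)" by (intro finite_measure_mono) auto
    then have "1 \<le> measure N (\<Union>i. A i)" using eq[of i] i by simp
    then have "measure N (\<Union>i. A i) = 1" by (rule antisym[OF prob_le_1])
    then show ?thesis using True by simp
  next
    case False
    have "emeasure N (\<Union>i. A i) = 0"
      using A eq False by (intro emeasure_UN_eq_0) (auto simp: emeasure_eq_measure)
    then show ?thesis using False by (simp add: measure_def)
  qed
qed

context prob_space
begin

lemma sigma_algebra_inv_sets:
  assumes e: "markov_kernel M e"
  shows "sigma_algebra (space M) (inv_sets M e)"
  unfolding sigma_algebra_iff2
proof (intro conjI ballI allI impI)
  show "inv_sets M e \<subseteq> Pow (space M)" unfolding inv_sets_def using sets.sets_into_space by auto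
  show "{} \<in> inv_sets M e" unfolding inv_sets_def by auto
next
  fix S assume "S \<in> inv_sets M e"
  then have S: "S \<in> sets M" and ae: "AE x in M. measure (e x) S = indicator S x"
    unfolding inv_sets_def by auto
  have "AE x in M. measure (e x) (space M - S) = indicator (space M - S) x"
  proof (rule AE_mp[OF ae AE_I2], intro impI)
    fix x assume x: "x \<in> space M" and eq: "measure (e x) S = indicator S x"
    have "measure (e x) (space M - S) = 1 - measure (e x) S"
      using prob_space.prob_compl[OF markov_kernelD(1)[OF e x], of S] markov_kernelD(2,3)[OF e x] S
      by simp
    then show "measure (e x) (space M - S) = indicator (space M - S) x"
      using eq x by (simp split: split_indicator)
  qed
  then show "space M - S \<in> inv_sets M e" using S unfolding inv_sets_def by auto
next
  fix A :: "nat \<Rightarrow> 'a set" assume "range A \<subseteq> inv_sets M e"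
  then have A: "range A \<subseteq> sets M"
    and ae: "AE x in M. \<forall>i. measure (e x) (A i) = indicator (A i) x"
    unfolding inv_sets_def by (auto simp: AE_all_countable)
  have "AE x in M. measure (e x) (\<Union>i. A i) = indicator (\<Union>i. A i) x"
    by (rule AE_mp[OF ae AE_I2])
       (use A markov_kernelD[OF e] in \<open>auto intro!: prob_UN_eq_indicator\<close>)
  moreover have "(\<Union>i. A i) \<in> sets M" by (rule sets.countable_UN[OF A])
  ultimately show "(\<Union>i. A i) \<in> inv_sets M e" unfolding inv_sets_def by auto
qed

lemma nn_integral_measure_preserving:
  assumes e: "markov_kernel M e" and mp: "bind M e = M" and A: "A \<in> sets M"
  shows "(\<integral>\<^sup>+x. emeasure (e x) A \<partial>M) = emeasure M A"
  using emeasure_bind[OF not_empty markov_kernel_subprob_algebra[OF e] A] mp by simp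

lemma p_complete_inv_sets:
  assumes e: "markov_kernel M e" and mp: "bind M e = M"
  shows "p_complete_subalgebra M (inv_sets M e)"
  unfolding p_complete_subalgebra_def
proof (intro conjI ballI impI sigma_algebra_inv_sets[OF e])
  show "inv_sets M e \<subseteq> sets M" unfolding inv_sets_def by auto
  fix A assume A: "A \<in> sets M" and "measure M A = 0"
  then have A0: "emeasure M A = 0" by (simp add: emeasure_eq_measure)
  have "AE x in M. emeasure (e x) A = 0"
    using nn_integral_measure_preserving[OF e mp A] A0
      nn_integral_0_iff_AE[OF measurable_markov_kernel_emeasure[OF e A]] by simp
  moreover have "AE x in M. x \<notin> A" using A A0 by (intro AE_not_in) auto
  ultimately have "AE x in M. measure (e x) A = indicator A x"
    by eventually_elim (simp add: measure_def)
  then show "A \<in> inv_sets M e" using A unfolding inv_sets_def by auto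
qed

lemma inv_sets_cong:
  assumes "kernel_ae_eq M e e'"
  shows "inv_sets M e = inv_sets M e'"
proof -
  have "AE x in M. e x = e' x" using assms unfolding kernel_ae_eq_def .
  then have "(AE x in M. measure (e x) A = indicator A x) \<longleftrightarrow> (AE x in M. measure (e' x) A = indicator A x)"
    for A by (auto elim: AE_mp)
  then show ?thesis unfolding inv_sets_def by auto
qed

lemma integral_measure_preserving:
  fixes h :: "'a \<Rightarrow> real"
  assumes e: "markov_kernel M e" and mp: "bind M e = M" and h: "h \<in> borel_measurable M"
    and h01: "\<And>x. x \<in> space M \<Longrightarrow> 0 \<le> h x \<and> h x \<le> 1"
  shows "(\<integral>x. (\<integral>y. h y \<partial>e x) \<partial>M) = (\<integral>x. h x \<partial>M)"
proof -
  have "(\<integral>x. indicator (space M) x * (\<integral>y. h y \<partial>e x) \<partial>M) = (\<integral>x. indicator (space M) x * h x \<partial>M)"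
    using mp by (intro integral_restriction_invariant[OF e _ sets.top h h01])
      (simp add: restriction_invariant_space_iff)
  then show ?thesis by (simp cong: Bochner_Integration.integral_cong)
qed

text \<open>If \<open>g\<close> is harmonic for a measure-preserving kernel, the variances of \<open>g\<close> under the
  measures \<open>e x\<close> integrate to \<open>\<integral>\<integral>g\<^sup>2 de dM - \<integral>g\<^sup>2 dM = 0\<close>.\<close>

lemma measure_preserving_harmonic_variance_eq_0:
  fixes g :: "'a \<Rightarrow> real"
  assumes e: "markov_kernel M e" and mp: "bind M e = M" and g: "g \<in> borel_measurable M"
    and g01: "\<And>x. x \<in> space M \<Longrightarrow> 0 \<le> g x \<and> g x \<le> 1"
    and harmonic: "AE x in M. (\<integral>y. g y \<partial>e x) = g x"
  shows "AE x in M. (\<integral>y. (g y - g x)\<^sup>2 \<partial>e x) = 0"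
proof -
  have ge: "g \<in> borel_measurable (e x)" "\<And>y. y \<in> space (e x) \<Longrightarrow> 0 \<le> g y \<and> g y \<le> 1"
    if "x \<in> space M" for x
    using g g01 markov_kernelD[OF e that] by (auto cong: measurable_cong_sets)
  define h where "h x = (\<integral>y. (g y)\<^sup>2 \<partial>e x)" for x
  define V where "V x = h x - (g x)\<^sup>2" for x
  have g2: "(\<lambda>x. (g x)\<^sup>2) \<in> borel_measurable M" "\<And>x. x \<in> space M \<Longrightarrow> 0 \<le> (g x)\<^sup>2 \<and> (g x)\<^sup>2 \<le> 1"
    using g g01 by (auto simp: power_le_one)
  have hM: "h \<in> borel_measurable M"
    unfolding h_def using measurable_compose[OF markov_kernel_subprob_algebra[OF e]
      integral_measurable_subprob_algebra[OF g2(1)]] .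
  have h01: "0 \<le> h x \<and> h x \<le> 1" if x: "x \<in> space M" for x
    unfolding h_def using prob_space.integral_unit_valued_bounds[OF markov_kernelD(1)[OF e x]]
      ge[OF x] by (auto simp: power_le_one)
  have V_var: "AE x in M. V x = (\<integral>y. (g y - g x)\<^sup>2 \<partial>e x)"
  proof (rule AE_mp[OF harmonic AE_I2], intro impI)
    fix x assume x: "x \<in> space M" and hx: "(\<integral>y. g y \<partial>e x) = g x"
    interpret ex: prob_space "e x" using markov_kernelD[OF e x] by simp
    have "ex.variance g = h x - (\<integral>y. g y \<partial>e x)\<^sup>2"
      unfolding h_def using ge[OF x] by (intro ex.variance_eq ex.integrable_unit_valued) (auto intro!: power_le_one)
    then show "V x = (\<integral>y. (g y - g x)\<^sup>2 \<partial>e x)" using hx by (simp add: V_def)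
  qed
  have V_nonneg: "AE x in M. 0 \<le> V x" using V_var by eventually_elim simp
  have int_h: "integrable M h" and int_g2: "integrable M (\<lambda>x. (g x)\<^sup>2)"
    using hM h01 g2 by (auto intro!: integrable_unit_valued)
  have "(\<integral>x. V x \<partial>M) = (\<integral>x. h x \<partial>M) - (\<integral>x. (g x)\<^sup>2 \<partial>M)"
    unfolding V_def using int_h int_g2 by (rule Bochner_Integration.integral_diff)
  also have "\<dots> = 0"
    using integral_measure_preserving[OF e mp g2] by (simp add: h_def)
  finally have "AE x in M. V x = 0"
    using integral_nonneg_eq_0_iff_AE[OF _ V_nonneg] int_h int_g2 by (simp add: V_def)
  with V_var show ?thesis by eventually_elim simp
qed

lemma (in prob_space) AE_eq_if_integral_square_diff_eq_0:
  fixes g :: "'a \<Rightarrow> real"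
  assumes g: "g \<in> borel_measurable M" and bound: "\<And>y. y \<in> space M \<Longrightarrow> \<bar>g y - c\<bar> \<le> 1"
    and zero: "(\<integral>y. (g y - c)\<^sup>2 \<partial>M) = 0"
  shows "AE y in M. g y = c"
proof -
  have "integrable M (\<lambda>y. (g y - c)\<^sup>2)"
    using g bound by (intro integrable_const_bound[where B=1] AE_I2) (auto simp: abs_square_le_1)
  then have "AE y in M. (g y - c)\<^sup>2 = 0"
    using zero by (subst integral_nonneg_eq_0_iff_AE[symmetric]) auto
  then show ?thesis by eventually_elim simp
qed

lemma measure_preserving_harmonic_AE_const:
  fixes g :: "'a \<Rightarrow> real"
  assumes e: "markov_kernel M e" and mp: "bind M e = M" and g: "g \<in> borel_measurable M"
    and g01: "\<And>x. x \<in> space M \<Longrightarrow> 0 \<le> g x \<and> g x \<le> 1"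
    and harmonic: "AE x in M. (\<integral>y. g y \<partial>e x) = g x"
  shows "AE x in M. AE y in e x. g y = g x"
proof -
  have "AE x in M. (\<integral>y. (g y - g x)\<^sup>2 \<partial>e x) = 0"
    by (rule measure_preserving_harmonic_variance_eq_0[OF e mp g g01 harmonic])
  moreover have "AE y in e x. g y = g x"
    if x: "x \<in> space M" and zero: "(\<integral>y. (g y - g x)\<^sup>2 \<partial>e x) = 0" for x
  proof -
    have "\<bar>g y - g x\<bar> \<le> 1" if "y \<in> space M" for y
      using g01[OF that] g01[OF x] by auto
    then show "AE y in e x. g y = g x"
      using zero g markov_kernelD[OF e x]
      by (intro prob_space.AE_eq_if_integral_square_diff_eq_0) (auto cong: measurable_cong_sets)
  qed
  ultimately show ?thesis by (auto elim: AE_mp)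
qed

lemma ae_idempotent_harmonic:
  assumes e: "markov_kernel M e" and idem: "ae_idempotent M e" and A: "A \<in> sets M"
  shows "AE x in M. (\<integral>y. measure (e y) A \<partial>e x) = measure (e x) A"
  using idem AE_space unfolding ae_idempotent_def kernel_ae_eq_def
  by eventually_elim (metis measure_kcomp[OF e e _ A])

lemma mp_idempotent_level_set:
  assumes mpi: "mp_idempotent M e" and A: "A \<in> sets M"
  shows "{x \<in> space M. c < measure (e x) A} \<in> inv_sets M e"
proof -
  note e = mp_idempotentD(1)[OF mpi]
  define S where "S = {x \<in> space M. c < measure (e x) A}"
  have S: "S \<in> sets M" unfolding S_def using measurable_markov_kernel_measure[OF e A] by measurable
  have const: "AE x in M. AE y in e x. measure (e y) A = measure (e x) A"
    using measurable_markov_kernel_measure[OF e A] markov_kernel_measure_le_1[OF e]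
      ae_idempotent_harmonic[OF e mp_idempotentD(3)[OF mpi] A]
    by (intro measure_preserving_harmonic_AE_const[OF e mp_idempotentD(2)[OF mpi]]) auto
  have "AE x in M. measure (e x) S = indicator S x"
  proof (rule AE_mp[OF const AE_I2], intro impI)
    fix x assume x: "x \<in> space M" and h: "AE y in e x. measure (e y) A = measure (e x) A"
    have "AE y in e x. y \<in> S \<longleftrightarrow> c < measure (e x) A"
      by (rule AE_mp[OF h AE_I2]) (use markov_kernelD(3)[OF e x] in \<open>auto simp: S_def\<close>)
    then have "measure (e x) S = (if c < measure (e x) A then 1 else 0)"
      using prob_eq_if_AE_iff_const[OF markov_kernelD(1)[OF e x]] markov_kernelD(2)[OF e x] S by simp
    then show "measure (e x) S = indicator S x" using x by (simp add: S_def indicator_def)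
  qed
  then show ?thesis unfolding inv_sets_def S_def[symmetric] using S by auto
qed

lemma mp_idempotent_restriction_invariant:
  assumes mpi: "mp_idempotent M e" and C: "C \<in> inv_sets M e"
  shows "restriction_invariant M e C"
proof -
  note e = mp_idempotentD(1)[OF mpi]
  have CM: "C \<in> sets M" and aeC: "AE x in M. measure (e x) C = indicator C x"
    using C unfolding inv_sets_def by auto
  have "(\<integral>\<^sup>+x. indicator C x * emeasure (e x) A \<partial>M) = emeasure M (A \<inter> C)" if A: "A \<in> sets M" for A
  proof -
    have "AE x in M. indicator C x * emeasure (e x) A = emeasure (e x) (A \<inter> C)"
    proof (rule AE_mp[OF aeC AE_I2], intro impI)
      fix x assume x: "x \<in> space M" and h: "measure (e x) C = indicator C x"
      interpret ex: prob_space "e x" using markov_kernelD[OF e x] by simp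
      have sx: "sets (e x) = sets M" using markov_kernelD[OF e x] by simp
      show "indicator C x * emeasure (e x) A = emeasure (e x) (A \<inter> C)"
      proof (cases "x \<in> C")
        case True
        then have "AE y in e x. y \<in> C" using h ex.AE_in_set_eq_1[of C] CM sx by simp
        then have "emeasure (e x) A = emeasure (e x) (A \<inter> C)"
          by (intro emeasure_eq_AE) (auto simp: sx A CM elim: AE_mp)
        then show ?thesis using True by simp
      next
        case False
        then have "emeasure (e x) C = 0" using h ex.emeasure_eq_measure by simp
        then have "emeasure (e x) (A \<inter> C) = 0"
          using emeasure_mono[of "A \<inter> C" C "e x"] CM sx by auto
        then show ?thesis using False by simp
      qed
    qed
    then have "(\<integral>\<^sup>+x. indicator C x * emeasure (e x) A \<partial>M) = (\<integral>\<^sup>+x. emeasure (e x) (A \<inter> C) \<partial>M)"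
      by (rule nn_integral_cong_AE)
    also have "\<dots> = emeasure M (A \<inter> C)"
      using nn_integral_measure_preserving[OF e mp_idempotentD(2)[OF mpi]] A CM by auto
    finally show ?thesis .
  qed
  then show ?thesis using restriction_invariant_iff_emeasure[OF e CM not_empty] by simp
qed

lemma complete_subalgebra_inv_sets:
  "mp_idempotent M e \<Longrightarrow> complete_subalgebra M (inv_sets M e)"
  using complete_subalgebraI p_complete_inv_sets mp_idempotentD by blast

lemma mp_idempotent_is_rcp:
  assumes mpi: "mp_idempotent M e"
  shows "is_rcp M (inv_sets M e) e"
proof -
  interpret I: complete_subalgebra M "inv_sets M e" using complete_subalgebra_inv_sets[OF mpi] .
  show ?thesis
  proof (rule I.is_rcpI[OF I.markov_kernel_measurable_MB[OF mp_idempotentD(1)[OF mpi]]])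
    fix A assume "A \<in> sets M"
    then show "(\<lambda>x. measure (e x) A) \<in> borel_measurable I.MB"
      unfolding borel_measurable_iff_greater using mp_idempotent_level_set[OF mpi] by simp
  qed (rule mp_idempotent_restriction_invariant[OF mpi])
qed

lemma idem_le_imp_inv_sets_subset:
  assumes m1: "mp_idempotent M e1" and m2: "mp_idempotent M e2" and le: "idem_le M e1 e2"
  shows "inv_sets M e1 \<subseteq> inv_sets M e2"
proof
  note e1 = mp_idempotentD(1)[OF m1] and e2 = mp_idempotentD(1)[OF m2]
  interpret I2: complete_subalgebra M "inv_sets M e2" using complete_subalgebra_inv_sets[OF m2] .
  note R2 = mp_idempotent_is_rcp[OF m2]
  fix C assume "C \<in> inv_sets M e1"
  then have C: "C \<in> sets M" and aeC: "AE x in M. measure (e1 x) C = indicator C x"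
    unfolding inv_sets_def by auto
  have "AE x in M. kcomp e1 e2 x = e1 x" using le unfolding idem_le_def kernel_ae_eq_def by simp
  with aeC have "AE x in M. measure (kcomp e1 e2 x) C = indicator C x"
    by eventually_elim simp
  moreover have "AE x in M. (\<integral>y. measure (e1 y) C \<partial>e2 x) = real_cond_exp M I2.MB (\<lambda>y. measure (e1 y) C) x"
    using measurable_markov_kernel_measure[OF e1 C] markov_kernel_measure_le_1[OF e1]
    by (intro I2.rcp_integral_eq_cond_exp[OF R2]) auto
  moreover have "AE x in M. real_cond_exp M I2.MB (\<lambda>y. measure (e1 y) C) x = real_cond_exp M I2.MB (indicator C) x"
    using C by (intro I2.sub.real_cond_exp_cong[OF aeC measurable_markov_kernel_measure[OF e1 C]]) simp
  moreover have "AE x in M. measure (e2 x) C = real_cond_exp M I2.MB (indicator C) x"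
    using R2 C unfolding is_rcp_def by auto
  ultimately have "AE x in M. measure (e2 x) C = indicator C x"
    using AE_space by eventually_elim (simp add: measure_kcomp[OF e1 e2 _ C])
  then show "C \<in> inv_sets M e2" using C unfolding inv_sets_def by auto
qed

lemma subalgebra_sigma_mono:
  "sigma_algebra \<Omega> B1 \<Longrightarrow> sigma_algebra \<Omega> B2 \<Longrightarrow> B1 \<subseteq> B2 \<Longrightarrow> subalgebra (sigma \<Omega> B2) (sigma \<Omega> B1)"
  unfolding subalgebra_def by (simp add: sigma_algebra.sets_measure_of_eq space_measure_of_conv)

lemma inv_sets_subset_kcomp_absorb1:
  assumes m1: "mp_idempotent M e1" and m2: "mp_idempotent M e2" and G: "countable_generator M G"
    and sub: "inv_sets M e1 \<subseteq> inv_sets M e2"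
  shows "kernel_ae_eq M (kcomp e1 e2) e1"
proof (rule kcomp_ae_eqI_countable_generator[OF mp_idempotentD(1)[OF m1] mp_idempotentD(1)[OF m2]
    mp_idempotentD(1)[OF m1] G])
  note e1 = mp_idempotentD(1)[OF m1]
  interpret I2: complete_subalgebra M "inv_sets M e2" using complete_subalgebra_inv_sets[OF m2] .
  fix A assume "A \<in> G"
  then have A: "A \<in> sets M" using G unfolding countable_generator_def by auto
  have "(\<lambda>x. measure (e1 x) A) \<in> borel_measurable I2.MB"
    unfolding borel_measurable_iff_greater using mp_idempotent_level_set[OF m1 A] sub by auto
  then show "AE x in M. (\<integral>y. measure (e1 y) A \<partial>e2 x) = measure (e1 x) A"
    using measurable_markov_kernel_measure[OF e1 A] markov_kernel_measure_le_1[OF e1]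
    by (intro I2.rcp_integral_measurable_MB[OF mp_idempotent_is_rcp[OF m2]]) auto
qed

lemma inv_sets_subset_kcomp_absorb2:
  assumes m1: "mp_idempotent M e1" and m2: "mp_idempotent M e2" and G: "countable_generator M G"
    and sub: "inv_sets M e1 \<subseteq> inv_sets M e2"
  shows "kernel_ae_eq M (kcomp e2 e1) e1"
proof (rule kcomp_ae_eqI_countable_generator[OF mp_idempotentD(1)[OF m2] mp_idempotentD(1)[OF m1]
    mp_idempotentD(1)[OF m1] G])
  note e2 = mp_idempotentD(1)[OF m2]
  note R1 = mp_idempotent_is_rcp[OF m1] and R2 = mp_idempotent_is_rcp[OF m2]
  interpret I1: complete_subalgebra M "inv_sets M e1" using complete_subalgebra_inv_sets[OF m1] .
  interpret I2: complete_subalgebra M "inv_sets M e2" using complete_subalgebra_inv_sets[OF m2] .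
  fix A assume "A \<in> G"
  then have A: "A \<in> sets M" using G unfolding countable_generator_def by auto
  have "AE x in M. (\<integral>y. measure (e2 y) A \<partial>e1 x) = real_cond_exp M I1.MB (\<lambda>y. measure (e2 y) A) x"
    using measurable_markov_kernel_measure[OF e2 A] markov_kernel_measure_le_1[OF e2]
    by (intro I1.rcp_integral_eq_cond_exp[OF R1]) auto
  moreover have "AE x in M. real_cond_exp M I1.MB (\<lambda>y. measure (e2 y) A) x
      = real_cond_exp M I1.MB (real_cond_exp M I2.MB (indicator A)) x"
    using R2 A unfolding is_rcp_def
    by (intro I1.sub.real_cond_exp_cong measurable_markov_kernel_measure[OF e2 A]) auto
  moreover have "AE x in M. real_cond_exp M I1.MB (real_cond_exp M I2.MB (indicator A)) x
      = real_cond_exp M I1.MB (indicator A) x"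
    using A subalgebra_sigma_mono[OF I1.sigma_algebra_B I2.sigma_algebra_B sub]
    by (intro I1.sub.real_cond_exp_nested_subalg[OF I2.subalgebra_MB]) simp_all
  moreover have "AE x in M. measure (e1 x) A = real_cond_exp M I1.MB (indicator A) x"
    using R1 A unfolding is_rcp_def by auto
  ultimately show "AE x in M. (\<integral>y. measure (e2 y) A \<partial>e1 x) = measure (e1 x) A"
    by eventually_elim simp
qed

lemma idem_le_iff_inv_sets_subset:
  "mp_idempotent M e1 \<Longrightarrow> mp_idempotent M e2 \<Longrightarrow> countable_generator M G \<Longrightarrow>
    idem_le M e1 e2 \<longleftrightarrow> inv_sets M e1 \<subseteq> inv_sets M e2"
  using idem_le_imp_inv_sets_subset inv_sets_subset_kcomp_absorb1 inv_sets_subset_kcomp_absorb2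
  unfolding idem_le_def by blast

end


section \<open>Existence of regular conditional probabilities on Polish spaces\<close>

inductive_set generated_algebra :: "'a set \<Rightarrow> 'a set set \<Rightarrow> 'a set set" for \<Omega> G where
  generated_algebra_basic: "A \<in> G \<Longrightarrow> A \<in> generated_algebra \<Omega> G"
| generated_algebra_top: "\<Omega> \<in> generated_algebra \<Omega> G"
| generated_algebra_compl: "A \<in> generated_algebra \<Omega> G \<Longrightarrow> \<Omega> - A \<in> generated_algebra \<Omega> G"
| generated_algebra_Un:
    "A \<in> generated_algebra \<Omega> G \<Longrightarrow> C \<in> generated_algebra \<Omega> G \<Longrightarrow> A \<union> C \<in> generated_algebra \<Omega> G"

lemma algebra_generated_algebra:
  assumes "G \<subseteq> Pow \<Omega>"
  shows "algebra \<Omega> (generated_algebra \<Omega> G)"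
  unfolding algebra_iff_Un
proof (intro conjI ballI)
  show "generated_algebra \<Omega> G \<subseteq> Pow \<Omega>"
  proof
    fix A assume "A \<in> generated_algebra \<Omega> G"
    then show "A \<in> Pow \<Omega>" using assms by induct auto
  qed
  have "\<Omega> - \<Omega> \<in> generated_algebra \<Omega> G" by (intro generated_algebra_compl generated_algebra_top)
  then show "{} \<in> generated_algebra \<Omega> G" by simp
qed (auto intro: generated_algebra_compl generated_algebra_Un)

lemma generated_algebra_least:
  assumes R: "algebra \<Omega> R" and G: "G \<subseteq> R"
  shows "generated_algebra \<Omega> G \<subseteq> R"
proof
  interpret algebra \<Omega> R by (rule R)
  fix A assume "A \<in> generated_algebra \<Omega> G"
  then show "A \<in> R" using G by induct auto
qed

lemma generated_algebra_mono: "G \<subseteq> H \<Longrightarrow> generated_algebra \<Omega> G \<subseteq> generated_algebra \<Omega> H"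
proof
  fix A assume "A \<in> generated_algebra \<Omega> G" "G \<subseteq> H"
  then show "A \<in> generated_algebra \<Omega> H" by induct (auto intro: generated_algebra.intros)
qed

lemma generated_algebra_UN_chain:
  assumes inc: "\<And>k. S k \<subseteq> S (Suc k)" and A: "A \<in> generated_algebra \<Omega> (\<Union>k. S k)"
  shows "\<exists>k. A \<in> generated_algebra \<Omega> (S k)"
  using A
proof induct
  case (generated_algebra_Un A C)
  then obtain k1 k2 where "A \<in> generated_algebra \<Omega> (S k1)" "C \<in> generated_algebra \<Omega> (S k2)" by auto
  moreover have "S i \<subseteq> S (max k1 k2)" if "i \<le> max k1 k2" for i
    using lift_Suc_mono_le[of S, OF inc that] .
  ultimately have "A \<in> generated_algebra \<Omega> (S (max k1 k2))" "C \<in> generated_algebra \<Omega> (S (max k1 k2))"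
    using generated_algebra_mono by (metis max.cobounded1 max.cobounded2 subsetD)+
  then show ?case by (auto intro: generated_algebra.intros)
qed (auto intro: generated_algebra.intros)

text \<open>Every member of a generated algebra is the value of a finite Boolean expression
  over the generators, which gives countability.\<close>

datatype set_expr = Atom nat | Top | Compl set_expr | Join set_expr set_expr

instance set_expr :: countable by countable_datatype

primrec eval_set_expr :: "'a set \<Rightarrow> (nat \<Rightarrow> 'a set) \<Rightarrow> set_expr \<Rightarrow> 'a set" where
  "eval_set_expr \<Omega> g (Atom n) = g n"
| "eval_set_expr \<Omega> g Top = \<Omega>"
| "eval_set_expr \<Omega> g (Compl e) = \<Omega> - eval_set_expr \<Omega> g e"
| "eval_set_expr \<Omega> g (Join e1 e2) = eval_set_expr \<Omega> g e1 \<union> eval_set_expr \<Omega> g e2"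

lemma countable_generated_algebra:
  assumes "countable G"
  shows "countable (generated_algebra \<Omega> G)"
proof -
  define G' where "G' = insert \<Omega> G"
  have G': "countable G'" "G' \<noteq> {}" using assms unfolding G'_def by auto
  have "generated_algebra \<Omega> G' \<subseteq> range (eval_set_expr \<Omega> (from_nat_into G'))"
  proof
    fix A assume "A \<in> generated_algebra \<Omega> G'"
    then show "A \<in> range (eval_set_expr \<Omega> (from_nat_into G'))"
    proof induct
      case (generated_algebra_basic A)
      then have "A = eval_set_expr \<Omega> (from_nat_into G') (Atom (to_nat_on G' A))"
        using G' by (simp add: from_nat_into_to_nat_on)
      then show ?case by blast
    next
      case generated_algebra_top
      have "\<Omega> = eval_set_expr \<Omega> (from_nat_into G') Top" by simp
      then show ?case by blast
    next
      case (generated_algebra_compl A)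
      then obtain e where "A = eval_set_expr \<Omega> (from_nat_into G') e" by auto
      then have "\<Omega> - A = eval_set_expr \<Omega> (from_nat_into G') (Compl e)" by simp
      then show ?case by blast
    next
      case (generated_algebra_Un A C)
      then obtain e1 e2 where "A = eval_set_expr \<Omega> (from_nat_into G') e1"
        "C = eval_set_expr \<Omega> (from_nat_into G') e2" by auto
      then have "A \<union> C = eval_set_expr \<Omega> (from_nat_into G') (Join e1 e2)" by simp
      then show ?case by blast
    qed
  qed
  moreover have "generated_algebra \<Omega> G \<subseteq> generated_algebra \<Omega> G'"
    by (rule generated_algebra_mono) (auto simp: G'_def)
  moreover have "countable (range (eval_set_expr \<Omega> (from_nat_into G')))" by simp
  ultimately show ?thesis by (meson countable_subset order_trans)
qed

context
  fixes \<Omega> :: "'a set" and \<A> :: "'a set set" and \<nu> :: "'a set \<Rightarrow> real"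
  assumes algebra: "algebra \<Omega> \<A>"
    and nonneg: "\<And>A. A \<in> \<A> \<Longrightarrow> 0 \<le> \<nu> A"
    and additive: "\<And>A C. A \<in> \<A> \<Longrightarrow> C \<in> \<A> \<Longrightarrow> A \<inter> C = {} \<Longrightarrow> \<nu> (A \<union> C) = \<nu> A + \<nu> C"
begin

interpretation algebra \<Omega> \<A> by (rule algebra)

lemma content_empty: "\<nu> {} = 0"
  using additive[of "{}" "{}"] by simp

lemma content_Diff: "A \<in> \<A> \<Longrightarrow> C \<in> \<A> \<Longrightarrow> A \<subseteq> C \<Longrightarrow> \<nu> (C - A) = \<nu> C - \<nu> A"
  using additive[of A "C - A"] by (simp add: Un_absorb1 Diff)

lemma content_mono: "A \<in> \<A> \<Longrightarrow> C \<in> \<A> \<Longrightarrow> A \<subseteq> C \<Longrightarrow> \<nu> A \<le> \<nu> C"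
  using content_Diff nonneg[of "C - A"] by auto

lemma content_UN_le:
  fixes C :: "nat \<Rightarrow> 'a set"
  assumes "\<And>i. C i \<in> \<A>"
  shows "\<nu> (\<Union>i\<le>j. C i) \<le> (\<Sum>i\<le>j. \<nu> (C i))"
proof (induct j)
  case (Suc j)
  have "\<nu> (\<Union>i\<le>Suc j. C i) = \<nu> ((\<Union>i\<le>j. C i) \<union> (C (Suc j) - (\<Union>i\<le>j. C i)))"
    by (simp add: atMost_Suc Un_commute)
  also have "\<dots> = \<nu> (\<Union>i\<le>j. C i) + \<nu> (C (Suc j) - (\<Union>i\<le>j. C i))"
    using assms by (intro additive) auto
  also have "\<dots> \<le> (\<Sum>i\<le>j. \<nu> (C i)) + \<nu> (C (Suc j))"
    using Suc assms by (intro add_mono content_mono) auto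
  finally show ?case by simp
qed simp

lemma content_Inter_cores_gt:
  assumes A: "range A \<subseteq> \<A>" "decseq A" and K: "\<And>j. K j \<in> \<A>" "\<And>j. K j \<subseteq> A j"
    and small: "\<And>j. \<nu> (A j - K j) < r/2 * (1/2)^Suc j" and big: "\<And>j. r \<le> \<nu> (A j)"
    and r: "0 < r"
  shows "r/2 < \<nu> (\<Inter>i\<le>j. K i)"
proof -
  have LA: "(\<Inter>i\<le>j. K i) \<in> \<A>" using K by (intro finite_INT) auto
  have "(\<Inter>i\<le>j. K i) \<subseteq> A j" using K(2)[of j] by auto
  then have "\<nu> (A j) - \<nu> (\<Inter>i\<le>j. K i) = \<nu> (A j - (\<Inter>i\<le>j. K i))"
    using content_Diff[OF LA range_subsetD[OF A(1)]] by simp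
  also have "\<dots> \<le> \<nu> (\<Union>i\<le>j. A i - K i)"
  proof (intro content_mono Diff finite_UN ballI)
    show "A j - (\<Inter>i\<le>j. K i) \<subseteq> (\<Union>i\<le>j. A i - K i)"
    proof
      fix x assume "x \<in> A j - (\<Inter>i\<le>j. K i)"
      then obtain i where "i \<le> j" "x \<notin> K i" "x \<in> A j" by auto
      then show "x \<in> (\<Union>i\<le>j. A i - K i)" using A(2) by (auto simp: decseq_def)
    qed
  qed (use A K LA in auto)
  also have "\<dots> \<le> (\<Sum>i\<le>j. \<nu> (A i - K i))" using A(1) K by (intro content_UN_le) auto
  also have "\<dots> \<le> (\<Sum>i\<le>j. r/2 * (1/2)^Suc i)" using small by (intro sum_mono less_imp_le)
  also have "\<dots> = r/2 * (1 - (1/2)^Suc j)"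
    by (induct j) (simp_all add: field_simps)
  also have "\<dots> < r/2" using r by simp
  finally show ?thesis using big[of j] by linarith
qed

lemma compact_class_content_small:
  assumes core: "\<And>A n. A \<in> \<A> \<Longrightarrow> \<kappa> A n \<in> \<A> \<and> \<kappa> A n \<subseteq> A \<and> compactin X (\<kappa> A n) \<and> closedin X (\<kappa> A n)"
    and approx: "\<And>A \<delta>. A \<in> \<A> \<Longrightarrow> \<delta> > 0 \<Longrightarrow> \<exists>n. \<nu> (A - \<kappa> A n) < \<delta>"
    and A: "range A \<subseteq> \<A>" "decseq A" "(\<Inter>i. A i) = {}" and r: "r > 0"
  shows "\<exists>j. \<nu> (A j) < r"
proof (rule ccontr)
  assume "\<nexists>j. \<nu> (A j) < r"
  then have big: "\<And>j. r \<le> \<nu> (A j)" by (simp add: not_less)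
  have "\<exists>n. \<nu> (A j - \<kappa> (A j) n) < r/2 * (1/2)^Suc j" for j
    using approx[of "A j" "r/2 * (1/2)^Suc j"] A(1) r by auto
  then obtain n where n: "\<And>j. \<nu> (A j - \<kappa> (A j) (n j)) < r/2 * (1/2)^Suc j" by metis
  define K where "K j = \<kappa> (A j) (n j)" for j
  define L where "L j = (\<Inter>i\<le>j. K i)" for j
  have K: "K j \<in> \<A>" "K j \<subseteq> A j" "compactin X (K j)" "closedin X (K j)" for j
    using core[of "A j" "n j"] A(1) by (auto simp: K_def)
  have "(\<Inter>j. L j) \<noteq> {}"
  proof (rule compact_space_imp_nest[of "subtopology X (K 0)"])
    show "compact_space (subtopology X (K 0))" using K(3) by (simp add: compact_space_subtopology)
    show "closedin (subtopology X (K 0)) (L j)" for j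
      unfolding closedin_subtopology L_def using K(4)
      by (intro exI[of _ "\<Inter>i\<le>j. K i"] conjI closedin_INT) auto
    show "L j \<noteq> {}" for j
      using content_Inter_cores_gt[OF A(1,2) K(1,2) n[folded K_def] big r, where j=j] r
      by (auto simp: L_def content_empty)
    show "decseq L" unfolding L_def decseq_def by auto
  qed
  then obtain x where "\<And>j. x \<in> L j" by auto
  then have "\<And>j. x \<in> A j" using K(2) unfolding L_def by blast
  then show False using A(3) by auto
qed

lemma compact_class_continuous:
  assumes core: "\<And>A n. A \<in> \<A> \<Longrightarrow> \<kappa> A n \<in> \<A> \<and> \<kappa> A n \<subseteq> A \<and> compactin X (\<kappa> A n) \<and> closedin X (\<kappa> A n)"
    and approx: "\<And>A \<delta>. A \<in> \<A> \<Longrightarrow> \<delta> > 0 \<Longrightarrow> \<exists>n. \<nu> (A - \<kappa> A n) < \<delta>"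
    and A: "range A \<subseteq> \<A>" "decseq A" "(\<Inter>i. A i) = {}"
  shows "(\<lambda>i. \<nu> (A i)) \<longlonglongrightarrow> 0"
proof (rule LIMSEQ_I)
  fix r :: real assume "0 < r"
  then obtain j where j: "\<nu> (A j) < r" using compact_class_content_small[OF core approx A] by blast
  have "norm (\<nu> (A n) - 0) < r" if "n \<ge> j" for n
  proof -
    have "A n \<in> \<A>" "A j \<in> \<A>" "A n \<subseteq> A j" using A(1,2) that by (auto simp: decseq_def)
    then show ?thesis using content_mono[of "A n" "A j"] nonneg[of "A n"] j by simp
  qed
  then show "\<exists>no. \<forall>n\<ge>no. norm (\<nu> (A n) - 0) < r" by blast
qed

end

lemma (in Metric_space) mtotally_bounded_mcball_cover:
  assumes S: "S \<subseteq> M" and cover: "\<And>r. r > 0 \<Longrightarrow> \<exists>C. finite C \<and> S \<subseteq> (\<Union>c\<in>C. mcball c r)"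
  shows "mtotally_bounded S"
  unfolding mtotally_bounded_def
proof (intro allI impI)
  fix e :: real assume e: "e > 0"
  then obtain C where C: "finite C" "S \<subseteq> (\<Union>c\<in>C. mcball c (e/3))" using cover[of "e/3"] by auto
  define C' where "C' = {c \<in> C. mcball c (e/3) \<inter> S \<noteq> {}}"
  define p where "p c = (SOME q. q \<in> mcball c (e/3) \<inter> S)" for c
  have p: "p c \<in> mcball c (e/3) \<inter> S" if "c \<in> C'" for c
  proof -
    from that obtain q where "q \<in> mcball c (e/3) \<inter> S" unfolding C'_def by blast
    then show ?thesis unfolding p_def by (rule someI)
  qed
  show "\<exists>K. finite K \<and> K \<subseteq> S \<and> S \<subseteq> (\<Union>x\<in>K. mball x e)"
  proof (intro exI conjI)
    show "finite (p ` C')" using C(1) unfolding C'_def by auto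
    show "p ` C' \<subseteq> S" using p by auto
    show "S \<subseteq> (\<Union>x\<in>p ` C'. mball x e)"
    proof
      fix x assume x: "x \<in> S"
      then obtain c where c: "c \<in> C" "x \<in> mcball c (e/3)" using C(2) by auto
      then have cC: "c \<in> C'" using x unfolding C'_def by auto
      have pc: "p c \<in> mcball c (e/3)" using p[OF cC] by auto
      have "d (p c) x \<le> d (p c) c + d c x" using pc c by (intro triangle) auto
      also have "\<dots> < e" using pc c e by (auto simp: commute)
      finally show "x \<in> (\<Union>x\<in>p ` C'. mball x e)" using pc c cC by auto
    qed
  qed
qed

lemma (in Metric_space) closedin_dist_ge:
  assumes "S \<subseteq> M"
  shows "closedin mtopology {x \<in> M. \<forall>y\<in>S. a \<le> d x y}"
  unfolding closedin_metric
proof (intro conjI allI impI)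
  fix x assume x: "x \<in> M - {x \<in> M. \<forall>y\<in>S. a \<le> d x y}"
  then obtain y where y: "y \<in> S" "d x y < a" by auto
  have "disjnt {x \<in> M. \<forall>y\<in>S. a \<le> d x y} (mball x (a - d x y))"
    unfolding disjnt_def
  proof (rule equals0I)
    fix z assume z: "z \<in> {x \<in> M. \<forall>y\<in>S. a \<le> d x y} \<inter> mball x (a - d x y)"
    then have "a \<le> d z y" using y by auto
    moreover have "d z y \<le> d z x + d x y" using x z y assms by (intro triangle) auto
    ultimately show False using z by (auto simp: commute)
  qed
  then show "\<exists>r>0. disjnt {x \<in> M. \<forall>y\<in>S. a \<le> d x y} (mball x r)"
    using y by (intro exI[of _ "a - d x y"]) auto
qed auto

lemma (in Metric_space) openin_eq_Union_dense_balls: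
  assumes dense: "\<And>x r. x \<in> M \<Longrightarrow> 0 < r \<Longrightarrow> \<exists>c\<in>D. d x c < r" and D: "D \<subseteq> M"
    and U: "openin mtopology U"
  shows "U = \<Union>{b \<in> (\<lambda>(c, n::nat). mball c (1 / Suc n)) ` (D \<times> UNIV). b \<subseteq> U}"
proof
  show "U \<subseteq> \<Union>{b \<in> (\<lambda>(c, n::nat). mball c (1 / Suc n)) ` (D \<times> UNIV). b \<subseteq> U}"
  proof
    fix x assume x: "x \<in> U"
    then obtain r where r: "r > 0" "mball x r \<subseteq> U" using U unfolding openin_mtopology by auto
    have xM: "x \<in> M" using x U openin_subset by fastforce
    obtain n where n: "1 / Suc n < r / 2" using r by (metis nat_approx_posE half_gt_zero)
    obtain c where c: "c \<in> D" "d x c < 1 / Suc n" using dense[OF xM, of "1 / Suc n"] by auto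
    have cM: "c \<in> M" using c D by auto
    have "mball c (1 / Suc n) \<subseteq> U"
    proof
      fix z assume z: "z \<in> mball c (1 / Suc n)"
      have "d x z \<le> d x c + d c z" using xM cM z by (intro triangle) auto
      also have "\<dots> < r" using c z n by auto
      finally show "z \<in> U" using r z xM by auto
    qed
    moreover have "x \<in> mball c (1 / Suc n)" using xM cM c by (auto simp: commute)
    ultimately show "x \<in> \<Union>{b \<in> (\<lambda>(c, n::nat). mball c (1 / Suc n)) ` (D \<times> UNIV). b \<subseteq> U}"
      using c(1) by blast
  qed
qed blast

locale polish_prob_space = prob_space M + Metric_space "space M" d
  for M :: "'a measure" and d :: "'a \<Rightarrow> 'a \<Rightarrow> real" +
  assumes mcomplete: "mcomplete"
    and sets_eq_open: "sets M = sigma_sets (space M) {U. openin mtopology U}"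
    and separable: "separable_space mtopology"
begin

lemma openin_in_sets: "openin mtopology U \<Longrightarrow> U \<in> sets M"
  using sets_eq_open by auto

lemma closedin_in_sets: "closedin mtopology F \<Longrightarrow> F \<in> sets M"
  by (metis closedin_def openin_in_sets sets.compl_sets topspace_mtopology Diff_Diff_Int
      Int_absorb1 closedin_subset)

lemma countable_dense_subset:
  obtains D where "countable D" "D \<subseteq> space M" "D \<noteq> {}"
    "\<And>x r. x \<in> space M \<Longrightarrow> 0 < r \<Longrightarrow> \<exists>c\<in>D. d x c < r"
proof -
  obtain D where D: "countable D" "D \<subseteq> space M" "mtopology closure_of D = space M"
    using separable unfolding separable_space_def by auto
  have dense: "\<exists>c\<in>D. d x c < r" if "x \<in> space M" "0 < r" for x r
    using D(3) that unfolding metric_closure_of by auto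
  then have "D \<noteq> {}" using not_empty by (metis ex_in_conv zero_less_one empty_iff)
  then show ?thesis using that D dense by blast
qed

definition regular_sets :: "'a set set" where
  "regular_sets = {A \<in> sets M. \<forall>e>0. \<exists>F U. closedin mtopology F \<and> openin mtopology U \<and>
     F \<subseteq> A \<and> A \<subseteq> U \<and> measure M (U - F) < e}"

lemma regular_sets_subset_sets: "regular_sets \<subseteq> sets M"
  unfolding regular_sets_def by auto

lemma openin_regular:
  assumes U: "openin mtopology U"
  shows "U \<in> regular_sets"
proof -
  define F where "F n = {x \<in> space M. \<forall>y\<in>space M - U. 1 / Suc n \<le> d x y}" for n :: nat
  have F_closed: "closedin mtopology (F n)" for n
    unfolding F_def by (rule closedin_dist_ge) auto
  have FU: "F n \<subseteq> U" for n
    using openin_subset[OF U] by (force simp: F_def)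
  have UF: "U = (\<Union>n. F n)"
  proof
    show "U \<subseteq> (\<Union>n. F n)"
    proof
      fix x assume x: "x \<in> U"
      then obtain r where r: "r > 0" "mball x r \<subseteq> U" using U unfolding openin_mtopology by auto
      obtain n where n: "1 / Suc n < r" using r(1) by (metis nat_approx_posE)
      have "x \<in> space M" using x U openin_subset by fastforce
      then have "x \<in> F n" using r n by (force simp: F_def not_less)
      then show "x \<in> (\<Union>n. F n)" by auto
    qed
  qed (use FU in auto)
  have "incseq F"
    by (intro incseq_SucI) (auto simp: F_def intro: order_trans[rotated] simp: frac_le)
  moreover have Fs: "range F \<subseteq> sets M" using F_closed closedin_in_sets by auto
  ultimately have lim: "(\<lambda>n. measure M (F n)) \<longlonglongrightarrow> measure M U"
    using finite_Lim_measure_incseq UF by simp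
  show ?thesis unfolding regular_sets_def
  proof (intro CollectI conjI allI impI)
    show "U \<in> sets M" by (rule openin_in_sets[OF U])
    fix e :: real assume e: "e > 0"
    from lim e obtain n where "\<bar>measure M (F n) - measure M U\<bar> < e"
      by (metis LIMSEQ_D real_norm_def order.refl)
    moreover have "measure M (U - F n) = measure M U - measure M (F n)"
      using FU Fs openin_in_sets[OF U] by (intro finite_measure_Diff) auto
    ultimately have "measure M (U - F n) < e" by simp
    then show "\<exists>F U'. closedin mtopology F \<and> openin mtopology U' \<and> F \<subseteq> U \<and> U \<subseteq> U' \<and>
        measure M (U' - F) < e"
      using F_closed FU U by blast
  qed
qed

lemma regular_sets_compl:
  assumes A: "A \<in> regular_sets"
  shows "space M - A \<in> regular_sets"
  unfolding regular_sets_def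
proof (intro CollectI conjI allI impI)
  show "space M - A \<in> sets M" using A regular_sets_subset_sets by auto
  fix e :: real assume "e > 0"
  then obtain F U where FU: "closedin mtopology F" "openin mtopology U" "F \<subseteq> A" "A \<subseteq> U"
    "measure M (U - F) < e"
    using A unfolding regular_sets_def by blast
  have "(space M - F) - (space M - U) = U - F" using FU openin_subset[OF FU(2)] by auto
  then show "\<exists>F U. closedin mtopology F \<and> openin mtopology U \<and> F \<subseteq> space M - A \<and>
      space M - A \<subseteq> U \<and> measure M (U - F) < e"
    using FU by (intro exI[of _ "space M - U"] exI[of _ "space M - F"])
      (auto simp: closedin_diff openin_diff)
qed

lemma regular_sets_Un:
  assumes A: "A \<in> regular_sets" and C: "C \<in> regular_sets"
  shows "A \<union> C \<in> regular_sets"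
  unfolding regular_sets_def
proof (intro CollectI conjI allI impI)
  show "A \<union> C \<in> sets M" using A C regular_sets_subset_sets by auto
  fix e :: real assume "e > 0"
  then have e2: "e/2 > 0" by simp
  obtain F1 U1 where 1: "closedin mtopology F1" "openin mtopology U1" "F1 \<subseteq> A" "A \<subseteq> U1"
    "measure M (U1 - F1) < e/2"
    using A e2 unfolding regular_sets_def by blast
  obtain F2 U2 where 2: "closedin mtopology F2" "openin mtopology U2" "F2 \<subseteq> C" "C \<subseteq> U2"
    "measure M (U2 - F2) < e/2"
    using C e2 unfolding regular_sets_def by blast
  have s: "U1 - F1 \<in> sets M" "U2 - F2 \<in> sets M"
    using 1 2 openin_in_sets closedin_in_sets by auto
  have "measure M ((U1 \<union> U2) - (F1 \<union> F2)) \<le> measure M ((U1 - F1) \<union> (U2 - F2))"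
    using s by (intro finite_measure_mono) auto
  also have "\<dots> \<le> measure M (U1 - F1) + measure M (U2 - F2)"
    using s by (intro measure_Un_le) auto
  finally have "measure M ((U1 \<union> U2) - (F1 \<union> F2)) < e" using 1 2 by simp
  then show "\<exists>F U. closedin mtopology F \<and> openin mtopology U \<and> F \<subseteq> A \<union> C \<and> A \<union> C \<subseteq> U \<and>
      measure M (U - F) < e"
    using 1 2 by (intro exI[of _ "F1 \<union> F2"] exI[of _ "U1 \<union> U2"]) auto
qed

lemma algebra_regular_sets: "algebra (space M) regular_sets"
  unfolding algebra_iff_Un
proof (intro conjI ballI)
  show "regular_sets \<subseteq> Pow (space M)" using regular_sets_subset_sets sets.sets_into_space by auto
  have "space M - space M \<in> regular_sets" by (intro regular_sets_compl openin_regular) simp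
  then show "{} \<in> regular_sets" by simp
qed (auto intro: regular_sets_compl regular_sets_Un)

lemma closedin_regular:
  assumes F: "closedin mtopology F"
  shows "F \<in> regular_sets"
proof -
  have "space M - (space M - F) \<in> regular_sets"
    using F by (intro regular_sets_compl openin_regular) (simp add: closedin_def)
  then show ?thesis using closedin_subset[OF F] by (simp add: Diff_Diff_Int Int_absorb1)
qed

lemma mcballs_cover_almost:
  assumes r: "r > 0" and e: "e > 0"
  obtains C where "finite C" "C \<subseteq> space M" "measure M (space M - (\<Union>c\<in>C. mcball c r)) < e"
proof -
  obtain D where D: "countable D" "D \<subseteq> space M" "D \<noteq> {}"
    "\<And>x r. x \<in> space M \<Longrightarrow> 0 < r \<Longrightarrow> \<exists>c\<in>D. d x c < r"
    using countable_dense_subset by blast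
  define c where "c = from_nat_into D"
  have c: "c i \<in> D" for i unfolding c_def using D(3) by (rule from_nat_into)
  define B where "B N = (\<Union>i<N. mcball (c i) r)" for N
  have B_sets: "B N \<in> sets M" for N
    unfolding B_def by (intro closedin_in_sets closedin_Union) auto
  have "incseq B" unfolding B_def incseq_def by (auto, meson lessThan_iff less_le_trans)
  moreover have "(\<Union>N. B N) = space M"
  proof
    show "space M \<subseteq> (\<Union>N. B N)"
    proof
      fix x assume x: "x \<in> space M"
      then obtain y where y: "y \<in> D" "d x y < r" using D(4)[OF x r] by auto
      then obtain i where "c i = y" unfolding c_def using D(1) by (metis from_nat_into_to_nat_on)
      then have "x \<in> mcball (c i) r" using x y D(2) by (auto simp: commute)
      then show "x \<in> (\<Union>N. B N)" unfolding B_def by blast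
    qed
  qed (auto simp: B_def)
  ultimately have "(\<lambda>N. measure M (B N)) \<longlonglongrightarrow> measure M (space M)"
    using finite_Lim_measure_incseq[of B] B_sets by auto
  then obtain N where "\<bar>measure M (B N) - measure M (space M)\<bar> < e"
    using e by (metis LIMSEQ_D real_norm_def order.refl)
  moreover have "measure M (space M - B N) = measure M (space M) - measure M (B N)"
    using B_sets by (simp add: prob_compl prob_space)
  ultimately have "measure M (space M - B N) < e" by linarith
  then show ?thesis using that[of "c ` {..<N}"] c D(2) by (auto simp: B_def)
qed

text \<open>Tightness (Ulam): choosing finitely many balls of radius \<open>1/(k+1)\<close> that miss mass
  \<open>< e/2^(k+2)\<close>, their intersection over all \<open>k\<close> is closed and totally bounded.\<close>

lemma tight:
  assumes e: "e > 0"
  obtains K where "compactin mtopology K" "measure M (space M - K) < e"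
proof -
  have "\<exists>C. finite C \<and> C \<subseteq> space M \<and>
      measure M (space M - (\<Union>c\<in>C. mcball c (1 / Suc k))) < (e/2) * (1/2)^Suc k" for k
    using mcballs_cover_almost[of "1 / Suc k" "(e/2) * (1/2)^Suc k"] e by auto
  then obtain C where C: "\<And>k. finite (C k)" "\<And>k. C k \<subseteq> space M"
    and small: "\<And>k. measure M (space M - (\<Union>c\<in>C k. mcball c (1 / Suc k))) < (e/2) * (1/2)^Suc k"
    by metis
  define B where "B k = (\<Union>c\<in>C k. mcball c (1 / Suc k))" for k
  define K where "K = (\<Inter>k. B k)"
  have B_closed: "closedin mtopology (B k)" for k
    unfolding B_def using C(1) by (intro closedin_Union) auto
  have B_sets: "space M - B k \<in> sets M" for k using closedin_in_sets[OF B_closed] by auto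
  have "mtotally_bounded K"
  proof (rule mtotally_bounded_mcball_cover)
    show "K \<subseteq> space M" unfolding K_def B_def by auto
    fix r :: real assume "r > 0"
    then obtain k where k: "1 / Suc k < r" by (metis nat_approx_posE)
    have "K \<subseteq> B k" unfolding K_def by auto
    also have "\<dots> \<subseteq> (\<Union>c\<in>C k. mcball c r)"
      unfolding B_def using k by (intro UN_mono mcball_subset_concentric) auto
    finally have "K \<subseteq> (\<Union>c\<in>C k. mcball c r)" .
    then show "\<exists>C. finite C \<and> K \<subseteq> (\<Union>c\<in>C. mcball c r)" using C(1) by blast
  qed
  moreover have K_closed: "closedin mtopology K" unfolding K_def using B_closed by (intro closedin_INT) auto
  ultimately have "compactin mtopology K"
    using mtotally_bounded_eq_compact_closure_of[OF mcomplete, of K] closure_of_closedin[OF K_closed] by simp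
  have sg: "summable (\<lambda>k. (e/2) * (1/2::real)^Suc k)"
    by (intro summable_mult sums_summable[OF power_half_series])
  have sm: "summable (\<lambda>k. measure M (space M - B k))"
    by (rule summable_comparison_test'[OF sg]) (use small in \<open>simp add: B_def less_imp_le\<close>)
  have "space M - K = (\<Union>k. space M - B k)" unfolding K_def by blast
  then have "measure M (space M - K) = measure M (\<Union>k. space M - B k)" by simp
  also have "\<dots> \<le> (\<Sum>k. measure M (space M - B k))"
    by (rule finite_measure_subadditive_countably) (use B_sets sm in auto)
  also have "\<dots> \<le> (\<Sum>k. (e/2) * (1/2)^Suc k)"
    by (rule suminf_le[OF _ sm sg]) (use small in \<open>simp add: B_def less_imp_le\<close>)
  also have "\<dots> = e/2" using sums_mult[OF power_half_series, of "e/2"] by (simp add: sums_iff)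
  finally show ?thesis using that \<open>compactin mtopology K\<close> e by simp
qed

lemma regular_compact_approx:
  assumes A: "A \<in> regular_sets" and e: "e > 0"
  shows "\<exists>K. compactin mtopology K \<and> K \<subseteq> A \<and> measure M (A - K) < e"
proof -
  obtain F U where FU: "closedin mtopology F" "openin mtopology U" "F \<subseteq> A" "A \<subseteq> U"
    "measure M (U - F) < e/2"
    using A half_gt_zero[OF e] unfolding regular_sets_def by blast
  obtain K where K: "compactin mtopology K" "measure M (space M - K) < e/2"
    using tight[of "e/2"] e by auto
  have K_closed: "closedin mtopology K"
    using compactin_imp_closedin[OF Hausdorff_space_mtopology K(1)] .
  have s: "A \<in> sets M" "F \<in> sets M" "K \<in> sets M" "U \<in> sets M"
    using A regular_sets_subset_sets closedin_in_sets[OF FU(1)] openin_in_sets[OF FU(2)]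
      closedin_in_sets[OF K_closed] by auto
  have "A - F \<inter> K \<subseteq> (U - F) \<union> (space M - K)"
    using FU(4) sets.sets_into_space[OF s(1)] by blast
  then have "measure M (A - F \<inter> K) \<le> measure M ((U - F) \<union> (space M - K))"
    using s by (intro finite_measure_mono) auto
  also have "\<dots> \<le> measure M (U - F) + measure M (space M - K)"
    using s by (intro measure_Un_le) auto
  finally have "measure M (A - F \<inter> K) < e" using FU K by simp
  then show ?thesis using closed_Int_compactin[OF FU(1) K(1)] FU by (intro exI[of _ "F \<inter> K"]) auto
qed

lemma countable_regular_base:
  obtains \<B> where "countable \<B>" "\<B> \<subseteq> regular_sets"
    "\<And>G. \<B> \<subseteq> G \<Longrightarrow> G \<subseteq> sets M \<Longrightarrow> sets M = sigma_sets (space M) G"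
proof -
  obtain D where D: "countable D" "D \<subseteq> space M" "D \<noteq> {}"
    "\<And>x r. x \<in> space M \<Longrightarrow> 0 < r \<Longrightarrow> \<exists>c\<in>D. d x c < r"
    using countable_dense_subset by blast
  define \<B> where "\<B> = (\<lambda>(c, n::nat). mball c (1 / Suc n)) ` (D \<times> UNIV)"
  have cover: "U = \<Union>{b \<in> \<B>. b \<subseteq> U}" if "openin mtopology U" for U
    unfolding \<B>_def using openin_eq_Union_dense_balls[OF D(4) D(2) that] .
  have "sets M = sigma_sets (space M) G" if G: "\<B> \<subseteq> G" "G \<subseteq> sets M" for G
  proof
    show "sigma_sets (space M) G \<subseteq> sets M" using G(2) by (rule sets.sigma_sets_subset)
    have "U \<in> sigma_sets (space M) G" if U: "openin mtopology U" for U
    proof -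
      have "\<Union>{b \<in> \<B>. b \<subseteq> U} \<in> sigma_sets (space M) G"
        using D(1) G(1) unfolding \<B>_def
        by (intro sigma_sets_UNION) (auto intro: countable_subset)
      then show ?thesis using cover[OF U] by simp
    qed
    then show "sets M \<subseteq> sigma_sets (space M) G"
      unfolding sets_eq_open by (intro sigma_sets_mono) auto
  qed
  moreover have "\<B> \<subseteq> regular_sets" unfolding \<B>_def by (auto intro: openin_regular)
  moreover have "countable \<B>" unfolding \<B>_def using D(1) by simp
  ultimately show ?thesis using that by blast
qed

definition compact_core :: "'a set \<Rightarrow> nat \<Rightarrow> 'a set" where
  "compact_core A n = (SOME K. compactin mtopology K \<and> K \<subseteq> A \<and> measure M (A - K) < 1 / Suc n)"

lemma compact_core:
  assumes "A \<in> regular_sets"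
  shows "compactin mtopology (compact_core A n)" "compact_core A n \<subseteq> A"
    "measure M (A - compact_core A n) < 1 / Suc n"
  using someI_ex[OF regular_compact_approx[OF assms, of "1 / Suc n"]]
  unfolding compact_core_def by auto

lemma compact_core_regular: "A \<in> regular_sets \<Longrightarrow> compact_core A n \<in> regular_sets"
  using compact_core(1) compactin_imp_closedin[OF Hausdorff_space_mtopology] closedin_regular by blast

text \<open>On such an algebra, a finitely additive set function that is inner regular with respect to
  the compact cores is automatically \<open>\<sigma>\<close>-additive.\<close>

definition core_algebra :: "'a set set \<Rightarrow> bool" where
  "core_algebra \<A> \<longleftrightarrow> countable \<A> \<and> algebra (space M) \<A> \<and> \<A> \<subseteq> regular_sets \<and>
     sets M = sigma_sets (space M) \<A> \<and> (\<forall>A\<in>\<A>. \<forall>n. compact_core A n \<in> \<A>)"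

lemma core_algebra_exists: "\<exists>\<A>. core_algebra \<A>"
proof -
  obtain \<B> where \<B>: "countable \<B>" "\<B> \<subseteq> regular_sets"
    "\<And>G. \<B> \<subseteq> G \<Longrightarrow> G \<subseteq> sets M \<Longrightarrow> sets M = sigma_sets (space M) G"
    using countable_regular_base by blast
  define S where "S = rec_nat \<B> (\<lambda>k Sk. Sk \<union> (\<lambda>(A, n). compact_core A n) ` (generated_algebra (space M) Sk \<times> UNIV))"
  have S0: "S 0 = \<B>" unfolding S_def by simp
  have SS: "S (Suc k) = S k \<union> (\<lambda>(A, n). compact_core A n) ` (generated_algebra (space M) (S k) \<times> UNIV)" for k
    unfolding S_def by simp
  have S: "S k \<subseteq> regular_sets \<and> countable (S k)" for k
  proof (induct k)
    case (Suc k)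
    then have "generated_algebra (space M) (S k) \<subseteq> regular_sets"
      by (intro generated_algebra_least algebra_regular_sets) auto
    moreover have "countable (generated_algebra (space M) (S k) \<times> (UNIV :: nat set))"
      using Suc countable_generated_algebra by auto
    ultimately show ?case using Suc by (auto simp: SS compact_core_regular)
  qed (use \<B> S0 in simp)
  define \<A> where "\<A> = generated_algebra (space M) (\<Union>k. S k)"
  have A_regular: "\<A> \<subseteq> regular_sets"
    unfolding \<A>_def using S by (intro generated_algebra_least algebra_regular_sets) auto
  have "countable \<A>" unfolding \<A>_def using S by (intro countable_generated_algebra) auto
  moreover have "algebra (space M) \<A>"
    unfolding \<A>_def using S regular_sets_subset_sets sets.sets_into_space
    by (intro algebra_generated_algebra) blast
  moreover have "sets M = sigma_sets (space M) \<A>"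
    using A_regular regular_sets_subset_sets S0
    by (intro \<B>(3)) (auto simp: \<A>_def intro: generated_algebra_basic)
  moreover have "compact_core A n \<in> \<A>" if A: "A \<in> \<A>" for A n
  proof -
    obtain k where "A \<in> generated_algebra (space M) (S k)"
      using generated_algebra_UN_chain[of S, OF _ A[unfolded \<A>_def]] SS by auto
    then have "compact_core A n \<in> S (Suc k)" using SS by auto
    then show ?thesis unfolding \<A>_def by (auto intro: generated_algebra_basic)
  qed
  ultimately show ?thesis using A_regular unfolding core_algebra_def by blast
qed

lemma core_algebra_countable_generator:
  assumes "core_algebra \<A>"
  shows "countable_generator M \<A>"
proof -
  interpret algebra "space M" \<A> using assms unfolding core_algebra_def by blast
  show ?thesis
    using assms Int_stable space_closed unfolding core_algebra_def countable_generator_def by blast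
qed

end


locale polish_complete_subalgebra = polish_prob_space M d + complete_subalgebra M B
  for M :: "'a measure" and d and B
begin

definition cond_prob :: "'a set \<Rightarrow> 'a \<Rightarrow> real" where
  "cond_prob A = real_cond_exp M MB (indicator A)"

lemma measurable_cond_prob [measurable]:
  "cond_prob A \<in> borel_measurable MB" "cond_prob A \<in> borel_measurable M"
  unfolding cond_prob_def by (rule borel_measurable_cond_exp borel_measurable_cond_exp2)+

lemma AE_cond_prob_nonneg: "A \<in> sets M \<Longrightarrow> AE x in M. 0 \<le> cond_prob A x"
  unfolding cond_prob_def by (intro sub.real_cond_exp_pos) auto

lemma AE_cond_prob_space: "AE x in M. cond_prob (space M) x = 1"
proof -
  have "AE x in M. cond_prob (space M) x = indicator (space M) x"
    unfolding cond_prob_def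
    by (intro sub.real_cond_exp_F_meas borel_measurable_indicator) (auto, metis sets.top sets_MB space_MB)
  then show ?thesis by (auto elim: AE_mp)
qed

lemma AE_cond_prob_Un:
  assumes "A \<in> sets M" "C \<in> sets M" "A \<inter> C = {}"
  shows "AE x in M. cond_prob (A \<union> C) x = cond_prob A x + cond_prob C x"
proof -
  have "indicator (A \<union> C) = (\<lambda>x. indicator A x + indicator C x :: real)"
    using assms(3) by (auto simp: indicator_disj_union)
  then show ?thesis unfolding cond_prob_def using assms
    by (simp add: sub.real_cond_exp_add)
qed

text \<open>By Markov's inequality, for every \<open>m\<close> the set where \<open>cond_prob (A - K n) \<ge> 1/(m+1)\<close> for all
  \<open>n\<close> has measure at most \<open>(m+1) \<cdot> measure M (A - K n) \<le> (m+1)/(n+1)\<close>.\<close>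

lemma AE_cond_prob_inner_approx:
  assumes A: "A \<in> sets M" and K: "\<And>n. K n \<in> sets M" "\<And>n. K n \<subseteq> A"
    and small: "\<And>n. measure M (A - K n) < 1 / Suc n"
  shows "AE x in M. \<exists>n. cond_prob (A - K n) x < 1 / Suc m"
proof -
  define E where "E = {x \<in> space M. \<forall>n. 1 / Suc m \<le> cond_prob (A - K n) x}"
  have E: "E \<in> sets M" unfolding E_def by measurable
  have AK: "A - K n \<in> sets M" for n using A K by auto
  have bound: "measure M E \<le> Suc m * (1 / Suc n)" for n
  proof -
    have "measure M E \<le> measure M {x \<in> space M. 1 / Suc m \<le> cond_prob (A - K n) x}"
      using E by (intro finite_measure_mono) (auto simp: E_def)
    also have "\<dots> \<le> (\<integral>x. cond_prob (A - K n) x \<partial>M) / (1 / Suc m)"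
      using AK AE_cond_prob_nonneg[OF AK] unfolding cond_prob_def
      by (intro integral_Markov_inequality_measure sub.real_cond_exp_int(1)) auto
    also have "(\<integral>x. cond_prob (A - K n) x \<partial>M) = measure M (A - K n)"
      unfolding cond_prob_def using sub.real_cond_exp_int(2)[of "indicator (A - K n)"] AK by simp
    also have "measure M (A - K n) / (1 / Suc m) = Suc m * measure M (A - K n)" by simp
    also have "\<dots> \<le> Suc m * (1 / Suc n)" using small[of n] by (intro mult_left_mono) auto
    finally show ?thesis .
  qed
  have "measure M E = 0"
  proof (rule ccontr)
    assume "measure M E \<noteq> 0"
    then have pos: "measure M E > 0" using measure_nonneg[of M E] by linarith
    obtain n :: nat where "Suc m / measure M E < n" using reals_Archimedean2 by blast
    then have "Suc m < Suc n * measure M E" using pos by (simp add: field_simps)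
    then show False using bound[of n] by (simp add: field_simps)
  qed
  then have "AE x in M. x \<notin> E" using E by (intro AE_not_in) (simp add: emeasure_eq_measure null_sets_def)
  then show ?thesis by (rule AE_mp) (auto simp: E_def not_le intro!: AE_I2)
qed

context
  fixes \<A> :: "'a set set"
  assumes \<A>: "core_algebra \<A>"
begin

lemma core_algebra_sets: "A \<in> \<A> \<Longrightarrow> A \<in> sets M"
  using \<A> unfolding core_algebra_def by (auto intro: sigma_sets.Basic)

lemma core_algebra_compact_core:
  assumes "A \<in> \<A>"
  shows "compact_core A n \<in> \<A>" "compact_core A n \<subseteq> A" "compactin mtopology (compact_core A n)"
    "closedin mtopology (compact_core A n)" "measure M (A - compact_core A n) < 1 / Suc n"
  using assms \<A> compact_core[of A n] compactin_imp_closedin[OF Hausdorff_space_mtopology]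
  unfolding core_algebra_def by auto

definition regular_point :: "'a \<Rightarrow> bool" where
  "regular_point x \<longleftrightarrow> (\<forall>A\<in>\<A>. 0 \<le> cond_prob A x) \<and> cond_prob (space M) x = 1 \<and>
     (\<forall>A\<in>\<A>. \<forall>C\<in>\<A>. A \<inter> C = {} \<longrightarrow> cond_prob (A \<union> C) x = cond_prob A x + cond_prob C x) \<and>
     (\<forall>A\<in>\<A>. \<forall>m. \<exists>n. cond_prob (A - compact_core A n) x < 1 / Suc m)"

lemma AE_regular_point: "AE x in M. regular_point x"
proof -
  have countable: "countable \<A>" using \<A> unfolding core_algebra_def by blast
  have "AE x in M. \<forall>A\<in>\<A>. 0 \<le> cond_prob A x"
    using countable core_algebra_sets AE_cond_prob_nonneg by (intro AE_ball_countable') auto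
  moreover have "AE x in M. \<forall>A\<in>\<A>. \<forall>C\<in>\<A>. A \<inter> C = {} \<longrightarrow> cond_prob (A \<union> C) x = cond_prob A x + cond_prob C x"
    using countable core_algebra_sets AE_cond_prob_Un
    by (intro AE_ball_countable' ballI) (auto intro: AE_mp[OF _ AE_I2])
  moreover have "AE x in M. \<forall>A\<in>\<A>. \<forall>m. \<exists>n. cond_prob (A - compact_core A n) x < 1 / Suc m"
    using countable core_algebra_sets core_algebra_compact_core
    by (intro AE_ball_countable' ballI iffD2[OF AE_all_countable] allI AE_cond_prob_inner_approx) auto
  ultimately show ?thesis using AE_cond_prob_space unfolding regular_point_def by eventually_elim auto
qed

lemma regular_point_extension:
  assumes x: "regular_point x"
  shows "\<exists>\<mu>. (\<forall>A\<in>\<A>. \<mu> A = ennreal (cond_prob A x)) \<and> measure_space (space M) (sets M) \<mu>"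
proof -
  have alg: "algebra (space M) \<A>" and gen: "sets M = sigma_sets (space M) \<A>"
    using \<A> unfolding core_algebra_def by auto
  interpret algebra "space M" \<A> by (rule alg)
  have nonneg: "\<And>A. A \<in> \<A> \<Longrightarrow> 0 \<le> cond_prob A x"
    and add: "\<And>A C. A \<in> \<A> \<Longrightarrow> C \<in> \<A> \<Longrightarrow> A \<inter> C = {} \<Longrightarrow> cond_prob (A \<union> C) x = cond_prob A x + cond_prob C x"
    using x unfolding regular_point_def by auto
  have "\<exists>\<mu>. (\<forall>A\<in>\<A>. \<mu> A = ennreal (cond_prob A x)) \<and> measure_space (space M) (sigma_sets (space M) \<A>) \<mu>"
  proof (rule caratheodory_empty_continuous)
    show "positive \<A> (\<lambda>A. ennreal (cond_prob A x))"
      using add[of "{}" "{}"] by (simp add: positive_def)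
    show "additive \<A> (\<lambda>A. ennreal (cond_prob A x))"
      using add nonneg by (auto simp: additive_def ennreal_plus)
    fix A :: "nat \<Rightarrow> 'a set" assume A: "range A \<subseteq> \<A>" "decseq A" "(\<Inter>i. A i) = {}"
    have "(\<lambda>i. cond_prob (A i) x) \<longlonglongrightarrow> 0"
    proof (rule compact_class_continuous[OF alg nonneg add _ _ A])
      show "compact_core C n \<in> \<A> \<and> compact_core C n \<subseteq> C \<and> compactin mtopology (compact_core C n) \<and>
          closedin mtopology (compact_core C n)" if "C \<in> \<A>" for C n
        using core_algebra_compact_core[OF that] by blast
      fix C :: "'a set" and \<delta> :: real assume "C \<in> \<A>" "\<delta> > 0"
      moreover obtain m :: nat where "1 / Suc m < \<delta>" using \<open>\<delta> > 0\<close> by (metis nat_approx_posE)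
      ultimately show "\<exists>n. cond_prob (C - compact_core C n) x < \<delta>"
        using x unfolding regular_point_def by (meson order.strict_trans)
    qed
    then show "(\<lambda>i. ennreal (cond_prob (A i) x)) \<longlonglongrightarrow> 0"
      using tendsto_ennrealI[of _ 0] by fastforce
  qed simp
  then show ?thesis using gen by simp
qed

lemma regular_points_in_B:
  obtains G where "G \<in> B" "AE x in M. x \<in> G" "\<And>x. x \<in> G \<Longrightarrow> regular_point x"
proof -
  obtain N where N: "N \<in> null_sets M" "{x \<in> space M. \<not> regular_point x} \<subseteq> N"
    using AE_regular_point by (auto elim!: AE_E)
  interpret B: sigma_algebra "space M" B by (rule sigma_algebra_B)
  have "space M - N \<in> B" using N(1) null_sets_subset_B by auto
  moreover have "AE x in M. x \<in> space M - N"
    using AE_not_in[OF N(1)] by (auto elim: AE_mp)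
  ultimately show ?thesis using that N(2) by blast
qed

context
  fixes G :: "'a set"
  assumes G: "G \<in> B" "AE x in M. x \<in> G" "\<And>x. x \<in> G \<Longrightarrow> regular_point x"
begin

definition cond_kernel :: "'a \<Rightarrow> 'a measure" where
  "cond_kernel x = (if x \<in> G then measure_of (space M) (sets M)
     (SOME \<mu>. (\<forall>A\<in>\<A>. \<mu> A = ennreal (cond_prob A x)) \<and> measure_space (space M) (sets M) \<mu>) else M)"

lemma sets_cond_kernel [simp]: "sets (cond_kernel x) = sets M"
  unfolding cond_kernel_def by (simp add: sets.sigma_sets_eq sets.space_closed)

lemma emeasure_cond_kernel:
  assumes "x \<in> G" "A \<in> \<A>"
  shows "emeasure (cond_kernel x) A = ennreal (cond_prob A x)"
proof -
  define \<mu> where "\<mu> = (SOME \<mu>. (\<forall>A\<in>\<A>. \<mu> A = ennreal (cond_prob A x)) \<and> measure_space (space M) (sets M) \<mu>)"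
  have \<mu>: "(\<forall>A\<in>\<A>. \<mu> A = ennreal (cond_prob A x)) \<and> measure_space (space M) (sets M) \<mu>"
    unfolding \<mu>_def using someI_ex[OF regular_point_extension[OF G(3)[OF assms(1)]]] .
  have "emeasure (cond_kernel x) A = \<mu> A"
    unfolding cond_kernel_def \<mu>_def[symmetric] using assms(1) \<mu> core_algebra_sets[OF assms(2)]
    by (simp add: emeasure_measure_of_sigma measure_space_def del: measure_of_subset)
  then show ?thesis using \<mu> assms(2) by simp
qed

lemma prob_space_cond_kernel: "prob_space (cond_kernel x)"
proof (cases "x \<in> G")
  case True
  have "space M \<in> \<A>" using \<A> unfolding core_algebra_def by (simp add: algebra.top)
  then have "emeasure (cond_kernel x) (space (cond_kernel x)) = 1"
    using emeasure_cond_kernel[OF True] G(3)[OF True] sets_eq_imp_space_eq[OF sets_cond_kernel]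
    unfolding regular_point_def by simp
  then show ?thesis by (rule prob_spaceI)
qed (simp add: cond_kernel_def prob_space_axioms)

lemma measurable_cond_kernel: "cond_kernel \<in> MB \<rightarrow>\<^sub>M prob_algebra M"
proof (rule measurable_prob_algebra_generated[where \<Omega>="space M" and G=\<A>])
  interpret algebra "space M" \<A> using \<A> unfolding core_algebra_def by blast
  show "sets M = sigma_sets (space M) \<A>" using \<A> unfolding core_algebra_def by blast
  show "Int_stable \<A>" "\<A> \<subseteq> Pow (space M)" by (rule Int_stable, rule space_closed)
  fix A assume A: "A \<in> \<A>"
  have "(\<lambda>x. if x \<in> G then ennreal (cond_prob A x) else emeasure M A) \<in> borel_measurable MB"
    using G(1) sets.sets_into_space[of G MB] by (intro measurable_If_set) (auto simp: Int_absorb2)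
  moreover have "emeasure (cond_kernel x) A = (if x \<in> G then ennreal (cond_prob A x) else emeasure M A)"
    for x using emeasure_cond_kernel[OF _ A] by (simp add: cond_kernel_def)
  ultimately show "(\<lambda>x. emeasure (cond_kernel x) A) \<in> borel_measurable MB" by simp
qed (simp_all add: prob_space_cond_kernel)

lemma restriction_invariant_cond_kernel:
  assumes C: "C \<in> B"
  shows "restriction_invariant M cond_kernel C"
proof -
  interpret algebra "space M" \<A> using \<A> unfolding core_algebra_def by blast
  have e: "markov_kernel M cond_kernel"
    unfolding markov_kernel_def using measurable_from_subalg[OF subalgebra_MB measurable_cond_kernel] .
  have CM: "C \<in> sets M" using C B_subset_sets by auto
  show ?thesis
  proof (rule restriction_invariantI_generator[OF e CM not_empty Int_stable space_closed _ top])
    show "sets M = sigma_sets (space M) \<A>" using \<A> unfolding core_algebra_def by blast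
    show "emeasure M C \<noteq> \<infinity>" by simp
    fix A assume A: "A \<in> \<A>"
    have "(\<integral>\<^sup>+x. indicator C x * emeasure (cond_kernel x) A \<partial>M) = (\<integral>\<^sup>+x. ennreal (indicator C x * cond_prob A x) \<partial>M)"
      using G(2) by (intro nn_integral_cong_AE) (auto simp: emeasure_cond_kernel[OF _ A] indicator_def elim: AE_mp)
    also have "\<dots> = ennreal (\<integral>x. indicator C x * cond_prob A x \<partial>M)"
    proof (rule nn_integral_eq_integral)
      show "integrable M (\<lambda>x. indicator C x * cond_prob A x)"
        using integrable_real_mult_indicator[OF CM sub.real_cond_exp_int(1), of "indicator A"]
          core_algebra_sets[OF A] by (simp add: cond_prob_def mult.commute)
      show "AE x in M. 0 \<le> indicator C x * cond_prob A x"
        by (rule AE_mp[OF G(2) AE_I2]) (use G(3) A in \<open>auto simp: regular_point_def\<close>)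
    qed
    also have "\<dots> = emeasure M (A \<inter> C)"
      using integral_indicator_cond_exp[OF core_algebra_sets[OF A] C] core_algebra_sets[OF A] CM
      by (simp add: cond_prob_def emeasure_eq_measure)
    finally show "(\<integral>\<^sup>+x. indicator C x * emeasure (cond_kernel x) A \<partial>M) = emeasure M (A \<inter> C)" .
  qed
qed

end

end

lemma rcp_exists: "\<exists>e. is_rcp M B e"
proof -
  obtain \<A> where \<A>: "core_algebra \<A>" using core_algebra_exists by blast
  obtain G where G: "G \<in> B" "AE x in M. x \<in> G" "\<And>x. x \<in> G \<Longrightarrow> regular_point \<A> x"
    using regular_points_in_B[OF \<A>] by blast
  have "is_rcp M B (cond_kernel \<A> G)"
    by (rule is_rcpI[OF measurable_cond_kernel[OF \<A> G] restriction_invariant_cond_kernel[OF \<A> G]])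
  then show ?thesis by blast
qed

end

section \<open>Standard Borel spaces\<close>

lemma standard_borel_polish:
  assumes "prob_space M" "standard_borel M"
  obtains d where "polish_prob_space M d"
proof -
  obtain T where T: "topspace T = space M" "completely_metrizable_space T" "separable_space T"
      "sets M = sigma_sets (space M) {U. openin T U}"
    using assms(2) unfolding standard_borel_def by blast
  obtain X d where d: "Metric_space X d" "Metric_space.mcomplete X d" "T = Metric_space.mtopology X d"
    using T(2) unfolding completely_metrizable_space_def by blast
  have "X = space M" using T(1) d Metric_space.topspace_mtopology by metis
  then have "polish_prob_space M d"
    using d T assms(1) unfolding polish_prob_space_def polish_prob_space_axioms_def by auto
  then show thesis by (rule that)
qed

lemma standard_borel_countable_generator:
  assumes "prob_space M" "standard_borel M"
  obtains G where "countable_generator M G"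
proof -
  obtain d where "polish_prob_space M d" using standard_borel_polish[OF assms] .
  then interpret polish_prob_space M d .
  show thesis using core_algebra_exists core_algebra_countable_generator that by blast
qed

lemma standard_borel_rcp_exists:
  assumes "prob_space M" "standard_borel M" "p_complete_subalgebra M B"
  shows "\<exists>e. is_rcp M B e"
proof -
  obtain d where "polish_prob_space M d" using standard_borel_polish[OF assms(1,2)] .
  then interpret polish_prob_space M d .
  interpret polish_complete_subalgebra M d B by unfold_locales (rule assms(3))
  show ?thesis by (rule rcp_exists)
qed

theorem theorem4p16:
  fixes M :: "'a measure"
  assumes "prob_space M" and "standard_borel M"
  shows
    "(\<forall>e. mp_idempotent M e \<longrightarrow> p_complete_subalgebra M (inv_sets M e))
   \<and> (\<forall>e e'. mp_idempotent M e \<and> mp_idempotent M e' \<and> kernel_ae_eq M e e'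
        \<longrightarrow> inv_sets M e = inv_sets M e')
   \<and> (\<forall>B. p_complete_subalgebra M B \<longrightarrow>
         (\<exists>e. is_rcp M B e)
       \<and> (\<forall>e e'. is_rcp M B e \<and> is_rcp M B e' \<longrightarrow> kernel_ae_eq M e e')
       \<and> (\<forall>e. is_rcp M B e \<longrightarrow> mp_idempotent M e \<and> inv_sets M e = B))
   \<and> (\<forall>e. mp_idempotent M e \<longrightarrow> is_rcp M (inv_sets M e) e)
   \<and> (\<forall>e1 e2. mp_idempotent M e1 \<and> mp_idempotent M e2 \<longrightarrow>
         (idem_le M e1 e2 \<longleftrightarrow> inv_sets M e1 \<subseteq> inv_sets M e2))
   \<and> (\<forall>B1 B2 e1 e2. p_complete_subalgebra M B1 \<and> p_complete_subalgebra M B2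
         \<and> is_rcp M B1 e1 \<and> is_rcp M B2 e2 \<longrightarrow> (B1 \<subseteq> B2 \<longleftrightarrow> idem_le M e1 e2))"
proof -
  interpret prob_space M by (rule assms(1))
  obtain G where G: "countable_generator M G"
    using standard_borel_countable_generator[OF assms] .
  note rcp = complete_subalgebra.rcp_mp_idempotent[OF complete_subalgebraI _ G]
    complete_subalgebra.inv_sets_rcp[OF complete_subalgebraI]
  show ?thesis
  proof (intro conjI allI impI; (elim conjE)?)
    show "p_complete_subalgebra M (inv_sets M e)" if "mp_idempotent M e" for e
      using p_complete_inv_sets mp_idempotentD that by blast
    show "inv_sets M e = inv_sets M e'" if "kernel_ae_eq M e e'" for e e'
      using inv_sets_cong[OF that] .
    show "\<exists>e. is_rcp M B e" if "p_complete_subalgebra M B" for B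
      using standard_borel_rcp_exists[OF assms that] .
    show "kernel_ae_eq M e e'"
      if "p_complete_subalgebra M B" "is_rcp M B e" "is_rcp M B e'" for B e e'
      using complete_subalgebra.rcp_unique[OF complete_subalgebraI[OF that(1)] that(2,3) G] .
    show "mp_idempotent M e" "inv_sets M e = B"
      if "p_complete_subalgebra M B" "is_rcp M B e" for B e
      using rcp[OF that] by simp_all
    show "is_rcp M (inv_sets M e) e" if "mp_idempotent M e" for e
      using mp_idempotent_is_rcp[OF that] .
    show "idem_le M e1 e2 \<longleftrightarrow> inv_sets M e1 \<subseteq> inv_sets M e2"
      if "mp_idempotent M e1" "mp_idempotent M e2" for e1 e2
      using idem_le_iff_inv_sets_subset[OF that G] .
    show "B1 \<subseteq> B2 \<longleftrightarrow> idem_le M e1 e2"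
      if "p_complete_subalgebra M B1" "p_complete_subalgebra M B2" "is_rcp M B1 e1" "is_rcp M B2 e2"
      for B1 B2 e1 e2
      using rcp[OF that(1,3)] rcp[OF that(2,4)] idem_le_iff_inv_sets_subset[OF _ _ G] by simp
  qed
qed

end
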